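(* Let $\gamma>0$, $s\in(0,q^{-1/2})$, $g\in\mathcal I^{\mathcal E}_\gamma$ and $F\in\mathcal M_s$. Then $g*_\gamma F=0$ if and only if $\mu_\gamma(g)\equiv0$ or $F=0$. In particular, if $g*_\gamma F=0$ for some nonzero $F\in\mathcal M_s$, then $g*_\gamma h=0$ for every function $h$ for which $g*_\gamma h$ is defined.
   Context: Fix $q\in(0,1)$. Notation: $(a;q)_k=\prod_{j=0}^{k-1}(1-aq^j)$, $(a;q)_\infty=\lim_k(a;q)_k$, $[k]_q!=(q;q)_k/(1-q)^k$, $e_q(x)=1/(x;q)_\infty$. The $q$-derivative is $(\partial f)(x)=\frac{f(x)-f(qx)}{(1-q)x}$ (extended to $x=0$ by continuity for $f$ holomorphic near $0$). For $\gamma>0$, $L(\gamma)=\{\pm q^k\gamma:k\in\mathbb Z\}$ and $\int_\gamma f=(1-q)\sum_{k\in\mathbb Z}\sum_{\epsilon=\pm1}q^k\gamma f(\epsilon q^k\gamma)$ whenever absolutely convergent. $\mathcal I^\infty_\gamma$ is the set of functions $f$ on $L(\gamma)$ with $\int_\gamma|f(x)x^e|<\infty$ for all integers $e\ge0$. Moments: $\mu_{e,\gamma}(f)=q^{(e^2+e)/2}\int_\gamma f(x)x^e$. The $q$-moment series is $\mu_\gamma(f)(t)=\sum_{k\ge0}\mu_{k,\gamma}(f)t^k/[k]_q!$; $\mathcal I^{\mathcal E}_\gamma$ is the set of $f\in\mathcal I^\infty_\gamma$ with $\mu_\gamma(f)$ entire. The $q$-convolution of $f\in\mathcal I^\infty_\gamma$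 with $g$ is $(f*_\gamma g)(x)=\sum_{e\ge0}\frac{(-1)^e\mu_{e,\gamma}(f)}{[e]_q!}(\partial^eg)(x)$ at all $x$ where the $q$-derivatives are defined and the series converges absolutely. For $s>0$, $\mathcal M_s$ is the set of functions $F(x)=f(x)e_{q^2}(-x^2)$ (holomorphic on $|\mathrm{Im}\,x|<1$) where $f(x)=\sum_{l\ge0}a_lx^l$ with $|a_l|\le Cs^lq^{l^2/2}$ for all $l$, for some $C>0$. *)

theory Defs
  imports "HOL-Analysis.Analysis"
begin

definition qpoch :: "complex \<Rightarrow> real \<Rightarrow> nat \<Rightarrow> complex" where
  "qpoch a q k = (\<Prod>j<k. 1 - a * complex_of_real (q ^ j))"

definition qpoch_inf :: "complex \<Rightarrow> real \<Rightarrow> complex" where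
  "qpoch_inf a q = lim (\<lambda>k. qpoch a q k)"

definition qfact :: "real \<Rightarrow> nat \<Rightarrow> real" where
  "qfact q k = (\<Prod>j<k. 1 - q ^ (Suc j)) / (1 - q) ^ k"

definition qexp :: "real \<Rightarrow> complex \<Rightarrow> complex" where
  "qexp q x = 1 / qpoch_inf x q"

definition qD :: "real \<Rightarrow> (complex \<Rightarrow> complex) \<Rightarrow> complex \<Rightarrow> complex" where
  "qD q f x = (if x \<noteq> 0
      then (f x - f (complex_of_real q * x)) / (complex_of_real (1 - q) * x)
      else Lim (at 0) (\<lambda>y. (f y - f (complex_of_real q * y)) / (complex_of_real (1 - q) * y)))"

text \<open>Terms of the q-integral over L(gamma), indexed by (k, epsilon) in Z x {-1,1}.\<close>
definition qint_terms :: "real \<Rightarrow> real \<Rightarrow> (real \<Rightarrow> complex) \<Rightarrow> int \<times> real \<Rightarrow> complex" where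
  "qint_terms q \<gamma> f = (\<lambda>(k, \<epsilon>). complex_of_real (q powi k * \<gamma>) * f (\<epsilon> * q powi k * \<gamma>))"

definition qint_index :: "(int \<times> real) set" where
  "qint_index = UNIV \<times> {-1, 1}"

definition qintegrable :: "real \<Rightarrow> real \<Rightarrow> (real \<Rightarrow> complex) \<Rightarrow> bool" where
  "qintegrable q \<gamma> f \<longleftrightarrow> (\<lambda>p. norm (qint_terms q \<gamma> f p)) summable_on qint_index"

definition qint :: "real \<Rightarrow> real \<Rightarrow> (real \<Rightarrow> complex) \<Rightarrow> complex" where
  "qint q \<gamma> f = complex_of_real (1 - q) * infsum (qint_terms q \<gamma> f) qint_index"

definition I_inf :: "real \<Rightarrow> real \<Rightarrow> (real \<Rightarrow> complex) set" where
  "I_inf q \<gamma> = {f. \<forall>e::nat. qintegrable q \<gamma> (\<lambda>x. f x * complex_of_real (x ^ e))}"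

definition qmoment :: "real \<Rightarrow> real \<Rightarrow> (real \<Rightarrow> complex) \<Rightarrow> nat \<Rightarrow> complex" where
  "qmoment q \<gamma> f e = complex_of_real (q ^ ((e^2 + e) div 2)) * qint q \<gamma> (\<lambda>x. f x * complex_of_real (x ^ e))"

definition qmoment_series :: "real \<Rightarrow> real \<Rightarrow> (real \<Rightarrow> complex) \<Rightarrow> complex \<Rightarrow> complex" where
  "qmoment_series q \<gamma> f t = (\<Sum>k. qmoment q \<gamma> f k * t ^ k / complex_of_real (qfact q k))"

definition I_E :: "real \<Rightarrow> real \<Rightarrow> (real \<Rightarrow> complex) set" where
  "I_E q \<gamma> = {f \<in> I_inf q \<gamma>.
      \<forall>t::complex. summable (\<lambda>k. qmoment q \<gamma> f k * t ^ k / complex_of_real (qfact q k))}"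

definition qconv_term :: "real \<Rightarrow> real \<Rightarrow> (real \<Rightarrow> complex) \<Rightarrow> (complex \<Rightarrow> complex) \<Rightarrow> complex \<Rightarrow> nat \<Rightarrow> complex" where
  "qconv_term q \<gamma> f g x e =
     (-1) ^ e * qmoment q \<gamma> f e / complex_of_real (qfact q e) * ((qD q ^^ e) g) x"

definition qconv_defined :: "real \<Rightarrow> real \<Rightarrow> (real \<Rightarrow> complex) \<Rightarrow> (complex \<Rightarrow> complex) \<Rightarrow> complex \<Rightarrow> bool" where
  "qconv_defined q \<gamma> f g x \<longleftrightarrow> summable (\<lambda>e. norm (qconv_term q \<gamma> f g x e))"

definition qconv :: "real \<Rightarrow> real \<Rightarrow> (real \<Rightarrow> complex) \<Rightarrow> (complex \<Rightarrow> complex) \<Rightarrow> complex \<Rightarrow> complex" where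
  "qconv q \<gamma> f g x = (\<Sum>e. qconv_term q \<gamma> f g x e)"

definition strip :: "complex set" where
  "strip = {x. \<bar>Im x\<bar> < 1}"

definition M_s :: "real \<Rightarrow> real \<Rightarrow> (complex \<Rightarrow> complex) set" where
  "M_s q s = {F. \<exists>(a::nat \<Rightarrow> complex) C. C > 0 \<and>
      (\<forall>l. norm (a l) \<le> C * s ^ l * q powr (real l ^ 2 / 2)) \<and>
      (\<forall>x\<in>strip. F x = (\<Sum>l. a l * x ^ l) * qexp (q^2) (- (x^2)))}"

end

theory Submission
  imports Defs "HOL-Complex_Analysis.Cauchy_Integral_Formula"
begin

(* Write F = f G with G(x) = e_{q^2}(-x^2) = 1/prod_j (1 + x^2 q^(2j)) and f(x) = sum_n a_n x^n,
   |a_n| <= C s^n q^(n^2/2). Since G(qx) = (1 + x^2) G(x), the q-derivative acts as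
   d(f G) = (T f) G for an operator T on coefficients that keeps the decay class up to a constant
   factor. Hence g *_gamma F = G H with H = sum_e m_e T^e f an entire power series, where
   m_e = (-1)^e mu_e(g)/[e]_q! are the coefficients of mu_gamma(g)(-t). If g *_gamma F vanishes on
   the strip, then H = 0 identically, in particular at the poles x_k = +-i q^(-k) of G.
   There T turns into a lower triangular operator on w_k = f(x_k) with diagonal entries
   1/((1-q) x_k) -> 0, and H(x_k) = 0 says M(T) w = 0 with M(z) = sum_e m_e z^e. If M is not
   identically zero it has no zeros near 0; peeling off the finitely many diagonal entries where
   M may vanish and using that eigenvectors of T grow faster than the a priori bound
   |w_k| <= K sigma^k q^(-k^2/2) (s < sigma < q^(-1/2)) gives w = 0. Finally f, vanishing at all
   +-i q^(-k), factors as (1 + x^2) f_1(qx) with f_1 of the same decay and a third of the constant,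
   which forces f = 0. *)

section \<open>Series estimates\<close>

lemma summable_power_mult_power_square:
  fixes r t :: real
  assumes r: "0 < r" "r < 1" and t: "0 \<le> t"
  shows "summable (\<lambda>n. t^n * r^(n^2))"
proof -
  obtain N where N: "r^N < 1/(2*(t+1))"
    using real_arch_pow_inv[of "1/(2*(t+1))" r] r t by auto
  have "t * r^N \<le> (t+1) * r^N" using r by (simp add: mult_right_mono)
  also have "\<dots> \<le> (t+1) * (1/(2*(t+1)))" using N t by (intro mult_left_mono) auto
  also have "\<dots> = 1/2" using t by simp
  finally have tN: "t * r^N \<le> 1/2" .
  show ?thesis
  proof (rule summable_comparison_test'[OF summable_geometric[of "1/2::real"]])
    fix n assume "n \<ge> N"
    have "t^n * r^(n^2) = (t * r^n)^n" by (simp add: power2_eq_square power_mult power_mult_distrib)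
    also have "\<dots> \<le> (t * r^N)^n"
      using r t \<open>n \<ge> N\<close> by (intro power_mono mult_left_mono power_decreasing) auto
    also have "\<dots> \<le> (1/2)^n" using tN r t by (intro power_mono) auto
    finally show "norm (t^n * r^(n^2)) \<le> (1/2)^n" using r t by simp
  qed simp
qed

lemma power_mult_power_square_bounded:
  fixes r t :: real
  assumes r: "0 < r" "r < 1" and t: "0 \<le> t"
  obtains B where "\<And>n. t^n * r^(n^2) \<le> B"
proof -
  have "(\<lambda>n. t^n * r^(n^2)) \<longlonglongrightarrow> 0"
    using summable_LIMSEQ_zero[OF summable_power_mult_power_square[OF r t]] .
  then have "Bseq (\<lambda>n. t^n * r^(n^2))" by (rule convergent_imp_Bseq[OF convergentI])
  then obtain K where "\<And>n. norm (t^n * r^(n^2)) \<le> K" by (auto simp: Bseq_def)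
  then show ?thesis by (intro that) (auto intro: abs_le_D1 simp del: norm_mult)
qed

lemma infsum_eq_suminf_if_summable_norm:
  fixes f :: "nat \<Rightarrow> 'a::banach"
  assumes "summable (\<lambda>n. norm (f n))"
  shows "infsum f UNIV = suminf f"
  using norm_summable_imp_has_sum[OF assms] summable_norm_cancel[OF assms]
  by (simp add: infsumI summable_sums)

lemma product_bounded_double_series:
  fixes u :: "nat \<Rightarrow> nat \<Rightarrow> 'a::banach" and A B :: "nat \<Rightarrow> real"
  assumes ub: "\<And>e n. norm (u e n) \<le> A e * B n" and sA: "summable A" and sB: "summable B"
    and A0: "\<And>e. A e \<ge> 0" and B0: "\<And>n. B n \<ge> 0"
  shows "summable (\<lambda>e. norm (\<Sum>n. u e n))" and "summable (\<lambda>n. norm (\<Sum>e. u e n))"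
    and "(\<Sum>e. \<Sum>n. u e n) = (\<Sum>n. \<Sum>e. u e n)"
proof -
  have hs: "((\<lambda>n. A e * B n) has_sum (A e * suminf B)) UNIV" for e
    by (rule sums_nonneg_imp_has_sum) (use sB A0 B0 in \<open>auto intro: sums_mult summable_sums\<close>)
  have gs: "(\<lambda>e. A e * suminf B) summable_on UNIV"
    using norm_summable_imp_summable_on[of "\<lambda>e. A e * suminf B"] sA A0 B0 suminf_nonneg[OF sB]
    by (simp add: summable_mult2)
  have "(\<lambda>(e,n). A e * B n) summable_on Sigma UNIV (\<lambda>_. UNIV)"
    by (rule summable_on_SigmaI[where g="\<lambda>e. A e * suminf B"]) (use hs gs A0 B0 in auto)
  then have "Infinite_Sum.abs_summable_on (\<lambda>(e,n). A e * B n) (UNIV \<times> UNIV)"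
    by (rule summable_on_cong[THEN iffD1, rotated]) (use A0 B0 in auto)
  then have "Infinite_Sum.abs_summable_on (\<lambda>(e,n). u e n) (UNIV \<times> UNIV)"
    by (rule Infinite_Sum.abs_summable_on_comparison_test) (use ub A0 B0 in auto)
  then have su: "(\<lambda>(e,n). u e n) summable_on UNIV \<times> UNIV" by (rule abs_summable_summable)
  have inner1: "summable (\<lambda>n. norm (u e n))" for e
    by (rule summable_comparison_test'[OF summable_mult[OF sB, of "A e"]]) (use ub in auto)
  have inner2: "summable (\<lambda>e. norm (u e n))" for n
    by (rule summable_comparison_test'[OF summable_mult2[OF sA, of "B n"]]) (use ub in auto)
  have outer1: "summable (\<lambda>e. norm (\<Sum>n. u e n))"
  proof (rule summable_comparison_test'[OF summable_mult2[OF sA, of "suminf B"]])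
    fix e
    have "norm (\<Sum>n. u e n) \<le> (\<Sum>n. norm (u e n))" by (rule summable_norm[OF inner1])
    also have "\<dots> \<le> (\<Sum>n. A e * B n)" by (rule suminf_le) (use ub inner1 summable_mult[OF sB] in auto)
    also have "\<dots> = A e * suminf B" by (rule suminf_mult[OF sB])
    finally show "norm (norm (\<Sum>n. u e n)) \<le> A e * suminf B" by simp
  qed
  have outer2: "summable (\<lambda>n. norm (\<Sum>e. u e n))"
  proof (rule summable_comparison_test'[OF summable_mult[OF sB, of "suminf A"]])
    fix n
    have "norm (\<Sum>e. u e n) \<le> (\<Sum>e. norm (u e n))" by (rule summable_norm[OF inner2])
    also have "\<dots> \<le> (\<Sum>e. A e * B n)" by (rule suminf_le) (use ub inner2 summable_mult2[OF sA] in auto)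
    also have "\<dots> = suminf A * B n" by (rule suminf_mult2[OF sA, symmetric])
    finally show "norm (norm (\<Sum>e. u e n)) \<le> suminf A * B n" by simp
  qed
  show "summable (\<lambda>e. norm (\<Sum>n. u e n))" "summable (\<lambda>n. norm (\<Sum>e. u e n))"
    by (fact outer1, fact outer2)
  have "(\<Sum>e. \<Sum>n. u e n) = infsum (\<lambda>e. infsum (\<lambda>n. u e n) UNIV) UNIV"
    using infsum_eq_suminf_if_summable_norm[OF inner1] infsum_eq_suminf_if_summable_norm[OF outer1]
    by simp
  also have "\<dots> = infsum (\<lambda>n. infsum (\<lambda>e. u e n) UNIV) UNIV"
    by (rule infsum_swap_banach[OF su])
  also have "\<dots> = (\<Sum>n. \<Sum>e. u e n)"
    using infsum_eq_suminf_if_summable_norm[OF inner2] infsum_eq_suminf_if_summable_norm[OF outer2]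
    by simp
  finally show "(\<Sum>e. \<Sum>n. u e n) = (\<Sum>n. \<Sum>e. u e n)" .
qed

lemma entire_powser_nonzero_near_0:
  fixes a :: "nat \<Rightarrow> complex"
  assumes sm: "\<And>x. summable (\<lambda>n. a n * x^n)" and am: "a m \<noteq> 0"
  obtains s where "s > 0" "\<And>z. z \<noteq> 0 \<Longrightarrow> norm z \<le> s \<Longrightarrow> (\<Sum>n. a n * z^n) \<noteq> 0"
proof (cases "a 0 = 0")
  case False
  have "isCont (\<lambda>x. \<Sum>n. a n * x^n) 0" by (rule isCont_powser_converges_everywhere[OF sm])
  then have "\<forall>\<^sub>F z in at 0. dist (\<Sum>n. a n * z^n) (\<Sum>n. a n * 0^n) < norm (a 0)"
    using False unfolding isCont_def tendsto_iff by simp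
  then obtain d where d: "d > 0"
    "\<And>z. z \<noteq> 0 \<Longrightarrow> dist z 0 < d \<Longrightarrow> dist (\<Sum>n. a n * z^n) (a 0) < norm (a 0)"
    unfolding eventually_at by auto
  show ?thesis
  proof (rule that[of "d/2"])
    fix z :: complex assume "z \<noteq> 0" "norm z \<le> d/2"
    then have "dist (\<Sum>n. a n * z^n) (a 0) < norm (a 0)" using d by simp
    then show "(\<Sum>n. a n * z^n) \<noteq> 0" by (auto simp: dist_norm)
  qed (use d in simp)
next
  case True
  then have "m > 0" using am by (cases m) auto
  obtain s where "0 < s" "\<And>z. z \<in> cball 0 s - {0} \<Longrightarrow> (\<Sum>n. a n * z^n) \<noteq> 0"
  proof (rule powser_0_nonzero[where r=1 and \<xi>=0 and f="\<lambda>x. \<Sum>n. a n * x^n" and m=m])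
    show "(\<lambda>n. a n * (x - 0) ^ n) sums (\<Sum>n. a n * x^n)" for x
      using summable_sums[OF sm[of x]] by simp
  qed (use True am \<open>m > 0\<close> in auto)
  then show ?thesis using that[of s] by auto
qed

lemma entire_powser_eq_0_if_vanishes_near_0:
  fixes h :: "nat \<Rightarrow> complex"
  assumes sm: "\<And>x. summable (\<lambda>n. h n * x^n)" and "0 < d"
    and z: "\<And>x. x \<noteq> 0 \<Longrightarrow> norm x < d \<Longrightarrow> (\<Sum>n. h n * x^n) = 0"
  shows "h n = 0"
proof (rule ccontr)
  assume "h n \<noteq> 0"
  then obtain s where s: "s > 0" "\<And>z. z \<noteq> 0 \<Longrightarrow> norm z \<le> s \<Longrightarrow> (\<Sum>n. h n * z^n) \<noteq> 0"
    using entire_powser_nonzero_near_0[OF sm] by blast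
  define x where "x = complex_of_real (min s (d/2))"
  have "x \<noteq> 0" "norm x \<le> s" "norm x < d" using s \<open>0 < d\<close> by (auto simp: x_def)
  then show False using s(2) z by blast
qed

section \<open>The q-Gaussian\<close>

lemma norm_less_1_imp_strip: "norm x < 1 \<Longrightarrow> x \<in> strip"
  using abs_Im_le_cmod[of x] by (simp add: strip_def)


definition qgauss :: "real \<Rightarrow> complex \<Rightarrow> complex" where
  "qgauss q x = qexp (q^2) (-(x^2))"

definition qgauss_factor :: "real \<Rightarrow> complex \<Rightarrow> nat \<Rightarrow> complex" where
  "qgauss_factor q x j = 1 + x^2 * complex_of_real ((q^2)^j)"

lemma strip_mult_q: "0 < q \<Longrightarrow> q < 1 \<Longrightarrow> x \<in> strip \<Longrightarrow> complex_of_real q * x \<in> strip"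
  by (simp add: strip_def abs_mult) (smt (verit) mult_less_cancel_right1 mult_nonneg_nonneg abs_ge_zero)

lemma convergent_prod_qgauss_factor:
  assumes "0 < q" "q < 1"
  shows "convergent_prod (qgauss_factor q x)"
proof -
  have "summable (\<lambda>j. norm (x^2) * (q^2)^j)"
    using assms by (intro summable_mult summable_geometric) (simp add: power_less_one_iff abs_less_iff)
  then have "summable (\<lambda>j. norm (qgauss_factor q x j - 1))"
    using assms by (simp add: qgauss_factor_def norm_mult norm_power)
  then show ?thesis
    by (intro abs_convergent_prod_imp_convergent_prod summable_imp_abs_convergent_prod)
qed

lemma qgauss_factor_nonzero:
  assumes q: "0 < q" "q < 1" and x: "x \<in> strip"
  shows "qgauss_factor q x j \<noteq> 0"
proof -
  have "(Im x)^2 < 1" using x by (simp add: strip_def abs_square_less_1)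
  moreover have "(q^2)^j * (Im x)^2 \<le> (Im x)^2"
    using q by (intro mult_left_le_one_le) (auto simp: power_le_one)
  moreover have "Re (qgauss_factor q x j) = 1 + (q^2)^j * (Re x)^2 - (q^2)^j * (Im x)^2"
    by (simp add: qgauss_factor_def power2_eq_square algebra_simps)
  moreover have "(q^2)^j * (Re x)^2 \<ge> 0" by simp
  ultimately have "Re (qgauss_factor q x j) > 0" by linarith
  then show ?thesis by auto
qed

lemma qgauss_eq_prodinf:
  assumes q: "0 < q" "q < 1"
  shows "qgauss q x = 1 / prodinf (qgauss_factor q x)"
proof -
  have "(\<lambda>n. \<Prod>i\<le>n. qgauss_factor q x i) \<longlonglongrightarrow> prodinf (qgauss_factor q x)"
    by (rule convergent_prod_LIMSEQ[OF convergent_prod_qgauss_factor[OF q]])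
  then have "(\<lambda>n. qpoch (-(x^2)) (q^2) (Suc n)) \<longlonglongrightarrow> prodinf (qgauss_factor q x)"
    by (simp add: qpoch_def qgauss_factor_def lessThan_Suc_atMost)
  then have "(\<lambda>n. qpoch (-(x^2)) (q^2) n) \<longlonglongrightarrow> prodinf (qgauss_factor q x)"
    by (rule LIMSEQ_imp_Suc)
  then show ?thesis unfolding qgauss_def qexp_def qpoch_inf_def by (simp add: limI)
qed

lemma prodinf_qgauss_factor_nonzero:
  "0 < q \<Longrightarrow> q < 1 \<Longrightarrow> x \<in> strip \<Longrightarrow> prodinf (qgauss_factor q x) \<noteq> 0"
  using prodinf_nonzero[OF convergent_prod_qgauss_factor qgauss_factor_nonzero] .

lemma qgauss_nonzero: "0 < q \<Longrightarrow> q < 1 \<Longrightarrow> x \<in> strip \<Longrightarrow> qgauss q x \<noteq> 0"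
  by (simp add: qgauss_eq_prodinf prodinf_qgauss_factor_nonzero)

lemma prodinf_qgauss_factor_shift:
  assumes q: "0 < q" "q < 1"
  shows "prodinf (qgauss_factor q x) = (1 + x^2) * prodinf (qgauss_factor q (complex_of_real q * x))"
proof -
  have "(\<Prod>i\<le>Suc n. qgauss_factor q x i)
      = (1 + x^2) * (\<Prod>i\<le>n. qgauss_factor q (complex_of_real q * x) i)" for n
    by (subst prod.atMost_Suc_shift)
       (simp add: qgauss_factor_def power_mult_distrib mult_ac)
  then have "(\<lambda>n. \<Prod>i\<le>Suc n. qgauss_factor q x i)
      \<longlonglongrightarrow> (1 + x^2) * prodinf (qgauss_factor q (complex_of_real q * x))"
    by (simp only:) (intro tendsto_mult tendsto_const convergent_prod_LIMSEQ
        convergent_prod_qgauss_factor[OF q])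
  moreover have "(\<lambda>n. \<Prod>i\<le>Suc n. qgauss_factor q x i) \<longlonglongrightarrow> prodinf (qgauss_factor q x)"
    by (rule LIMSEQ_Suc[OF convergent_prod_LIMSEQ[OF convergent_prod_qgauss_factor[OF q]]])
  ultimately show ?thesis using LIMSEQ_unique by blast
qed

lemma qgauss_mult_q:
  assumes q: "0 < q" "q < 1" and x: "x \<in> strip"
  shows "qgauss q (complex_of_real q * x) = (1 + x^2) * qgauss q x"
  using prodinf_qgauss_factor_shift[OF q, of x] prodinf_qgauss_factor_nonzero[OF q x]
    prodinf_qgauss_factor_nonzero[OF q strip_mult_q[OF q x]]
  by (simp add: qgauss_eq_prodinf[OF q] field_simps)

section \<open>Power series of quadratic-exponential decay\<close>

definition pseries :: "(nat \<Rightarrow> complex) \<Rightarrow> complex \<Rightarrow> complex" where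
  "pseries b x = (\<Sum>n. b n * x^n)"

definition decay_bound :: "real \<Rightarrow> real \<Rightarrow> real \<Rightarrow> (nat \<Rightarrow> complex) \<Rightarrow> bool" where
  "decay_bound r \<sigma> C b \<longleftrightarrow> (\<forall>n. norm (b n) \<le> C * \<sigma>^n * r^(n^2))"

lemma decay_bound_nonneg: "decay_bound r \<sigma> C b \<Longrightarrow> C \<ge> 0"
  unfolding decay_bound_def by (metis norm_ge_zero order_trans power_0 mult_1_right zero_power2)

lemma decay_bound_summable_norm:
  assumes r: "0 < r" "r < 1" and \<sigma>: "0 \<le> \<sigma>" and b: "decay_bound r \<sigma> C b"
  shows "summable (\<lambda>n. norm (b n * x^n))"
proof (rule summable_comparison_test'[OF summable_mult[OF
      summable_power_mult_power_square[OF r, of "\<sigma> * norm x"], of C]])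
  fix n
  have "norm (b n * x^n) = norm (b n) * norm x ^ n" by (simp add: norm_mult norm_power)
  also have "\<dots> \<le> C * \<sigma>^n * r^(n^2) * norm x ^ n"
    using b unfolding decay_bound_def by (intro mult_right_mono) auto
  also have "\<dots> = C * ((\<sigma> * norm x)^n * r^(n^2))" by (simp add: power_mult_distrib mult_ac)
  finally show "norm (norm (b n * x^n)) \<le> C * ((\<sigma> * norm x)^n * r^(n^2))" by simp
qed (use \<sigma> in simp)

lemma decay_bound_summable:
  "0 < r \<Longrightarrow> r < 1 \<Longrightarrow> 0 \<le> \<sigma> \<Longrightarrow> decay_bound r \<sigma> C b \<Longrightarrow> summable (\<lambda>n. b n * x^n)"
  using summable_norm_cancel[OF decay_bound_summable_norm] .

lemma decay_bound_square_root:
  assumes \<rho>: "0 < \<rho>" "\<rho> < 1" and "0 \<le> s" "0 < \<sigma>" and b: "decay_bound (\<rho>^2) s C b"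
  obtains C' where "decay_bound \<rho> \<sigma> C' b"
proof -
  have "0 \<le> s/\<sigma>" using \<open>0 \<le> s\<close> \<open>0 < \<sigma>\<close> by simp
  then obtain B where B: "\<And>n. (s/\<sigma>)^n * \<rho>^(n^2) \<le> B"
    using power_mult_power_square_bounded[OF \<rho>] by blast
  show ?thesis
  proof (rule that[of "C * B"], unfold decay_bound_def, rule allI)
    fix n
    have "norm (b n) \<le> C * s^n * (\<rho>^2)^(n^2)" using b by (simp add: decay_bound_def)
    also have "\<dots> = C * ((s/\<sigma>)^n * \<sigma>^n) * (\<rho>^(n^2) * \<rho>^(n^2))"
      using \<open>0 < \<sigma>\<close> by (simp only: power2_eq_square[of \<rho>] power_mult_distrib) (simp add: power_divide)
    also have "\<dots> = C * ((s/\<sigma>)^n * \<rho>^(n^2)) * (\<sigma>^n * \<rho>^(n^2))"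
      by (simp only: mult_ac)
    also have "\<dots> \<le> C * B * (\<sigma>^n * \<rho>^(n^2))"
      using B[of n] decay_bound_nonneg[OF b] \<rho> \<open>0 < \<sigma>\<close> by (intro mult_right_mono mult_left_mono) auto
    finally show "norm (b n) \<le> C * B * \<sigma>^n * \<rho>^(n^2)" by (simp add: mult_ac)
  qed
qed

lemma power_Suc_square: "r^((Suc n)^2) = r^(n^2) * r^(2*n) * (r::real)"
proof -
  have "(Suc n)^2 = n^2 + 2*n + 1" by (simp add: power2_eq_square)
  then show ?thesis by (simp add: power_add)
qed

definition qgauss_qD_coeffs :: "real \<Rightarrow> (nat \<Rightarrow> complex) \<Rightarrow> nat \<Rightarrow> complex" where
  "qgauss_qD_coeffs q b n = complex_of_real ((1 - q^(Suc n))/(1-q)) * b (Suc n)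
      - (if n = 0 then 0 else complex_of_real (q^(n-1)/(1-q)) * b (n-1))"

lemma pseries_qgauss_qD_coeffs:
  assumes q: "0 < q" "q < 1" and x: "x \<noteq> 0" and sm: "\<And>y. summable (\<lambda>n. b n * y^n)"
  shows "complex_of_real (1-q) * x * pseries (qgauss_qD_coeffs q b) x
    = pseries b x - (1 + x^2) * pseries b (complex_of_real q * x)"
proof -
  let ?qx = "complex_of_real q * x"
  have S1: "(\<lambda>n. b n * x^n) sums pseries b x" unfolding pseries_def by (rule summable_sums[OF sm])
  have S2: "(\<lambda>n. b n * ?qx^n) sums pseries b ?qx" unfolding pseries_def by (rule summable_sums[OF sm])
  define D where "D n = b n * x^n - b n * ?qx^n" for n
  have "D sums (pseries b x - pseries b ?qx)" unfolding D_def by (rule sums_diff[OF S1 S2])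
  then have SD: "(\<lambda>n. D (Suc n)) sums (pseries b x - pseries b ?qx)"
    by (subst sums_Suc_iff) (simp add: D_def)
  define E where "E n = (if n = 0 then 0
    else complex_of_real (1-q) * x * (complex_of_real (q^(n-1)/(1-q)) * b (n-1)) * x^n)" for n
  have "(\<lambda>n. x^2 * (b n * ?qx^n)) sums (x^2 * pseries b ?qx)" by (rule sums_mult[OF S2])
  moreover have "E (Suc n) = x^2 * (b n * ?qx^n)" for n
    using q by (simp add: E_def power_mult_distrib power2_eq_square field_simps)
  ultimately have "(\<lambda>n. E (Suc n)) sums (x^2 * pseries b ?qx)" by simp
  then have SE: "E sums (x^2 * pseries b ?qx)" by (subst (asm) sums_Suc_iff) (simp add: E_def)
  have "complex_of_real (1-q) * x * (qgauss_qD_coeffs q b n * x^n) = D (Suc n) - E n" for n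
  proof -
    let ?A = "complex_of_real ((1 - q^(Suc n))/(1-q)) * b (Suc n)"
    let ?I = "(if n = 0 then 0 else complex_of_real (q^(n-1)/(1-q)) * b (n-1))"
    have "complex_of_real (1-q) * complex_of_real ((1 - q^(Suc n))/(1-q))
        = complex_of_real (1 - q^(Suc n))"
      using q by (simp flip: of_real_mult)
    then have "complex_of_real (1-q) * x * (?A * x^n)
        = complex_of_real (1 - q^(Suc n)) * (b (Suc n) * x^(Suc n))"
      by (simp add: mult_ac)
    also have "\<dots> = D (Suc n)" by (simp add: D_def power_mult_distrib algebra_simps)
    finally have "complex_of_real (1-q) * x * (?A * x^n) = D (Suc n)" .
    moreover have "complex_of_real (1-q) * x * (?I * x^n) = E n"
      by (cases "n = 0") (simp_all add: E_def mult_ac)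
    ultimately show ?thesis
      unfolding qgauss_qD_coeffs_def by (simp only: left_diff_distrib right_diff_distrib)
  qed
  then have "(\<lambda>n. complex_of_real (1-q) * x * (qgauss_qD_coeffs q b n * x^n))
      sums ((pseries b x - pseries b ?qx) - x^2 * pseries b ?qx)"
    using sums_diff[OF SD SE] by simp
  then have "(\<lambda>n. qgauss_qD_coeffs q b n * x^n)
      sums (((pseries b x - pseries b ?qx) - x^2 * pseries b ?qx) / (complex_of_real (1-q) * x))"
    by (rule sums_mult_D) (use q x in simp)
  then show ?thesis using q x unfolding pseries_def by (simp add: sums_iff field_simps)
qed

lemma decay_bound_qgauss_qD_coeffs:
  assumes r: "0 < r" "r < 1" and q: "q = r^2" and \<sigma>: "0 < \<sigma>" and b: "decay_bound r \<sigma> C b"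
  shows "decay_bound r \<sigma> (C * ((\<sigma>*r + 1/(\<sigma>*r))/(1-q))) (qgauss_qD_coeffs q b)"
  unfolding decay_bound_def
proof
  fix n
  have q01: "0 < q" "q < 1" using r q by (auto simp: power_less_one_iff)
  define P where "P n = C * \<sigma>^n * r^(n^2)" for n
  have P0: "P n \<ge> 0" for n using decay_bound_nonneg[OF b] \<sigma> r by (simp add: P_def)
  have bP: "norm (b n) \<le> P n" for n using b by (simp add: decay_bound_def P_def)
  have P_Suc: "P (Suc n) = P n * (\<sigma> * r * q^n)" for n
  proof -
    have "r^(2*n) = q^n" by (simp add: q power_mult)
    then show ?thesis by (simp add: P_def power_Suc_square mult_ac)
  qed
  have head: "norm (complex_of_real ((1 - q^(Suc n))/(1-q)) * b (Suc n)) \<le> P n * (\<sigma>*r/(1-q))"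
  proof -
    have "q^(Suc n) \<le> 1" using q01 by (intro power_le_one) auto
    then have "\<bar>(1 - q^(Suc n))/(1-q)\<bar> \<le> 1/(1-q)" using q01 by (simp add: divide_right_mono)
    then have "norm (complex_of_real ((1 - q^(Suc n))/(1-q)) * b (Suc n)) \<le> 1/(1-q) * P (Suc n)"
      unfolding norm_mult norm_of_real using bP[of "Suc n"] q01 by (intro mult_mono) auto
    also have "\<dots> \<le> 1/(1-q) * (P n * (\<sigma> * r))"
      unfolding P_Suc using P0[of n] q01 \<sigma> r
      by (intro mult_left_mono mult_right_le_one_le) (auto simp: power_le_one)
    finally show ?thesis by simp
  qed
  have tail: "norm (if n = 0 then 0 else complex_of_real (q^(n-1)/(1-q)) * b (n-1))
      \<le> P n * (1/(\<sigma>*r)/(1-q))"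
  proof (cases n)
    case 0 then show ?thesis using P0 q01 \<sigma> r by simp
  next
    case (Suc m)
    have "norm (complex_of_real (q^m/(1-q)) * b m) \<le> q^m/(1-q) * P m"
      unfolding norm_mult norm_of_real using q01 bP[of m] by (intro mult_mono) auto
    also have "\<dots> = P (Suc m) * (1/(\<sigma>*r)/(1-q))"
      unfolding P_Suc using \<sigma> r by simp
    finally show ?thesis using Suc by simp
  qed
  have "norm (qgauss_qD_coeffs q b n)
      \<le> norm (complex_of_real ((1 - q^(Suc n))/(1-q)) * b (Suc n))
        + norm (if n = 0 then 0 else complex_of_real (q^(n-1)/(1-q)) * b (n-1))"
    unfolding qgauss_qD_coeffs_def by (rule norm_triangle_ineq4)
  also have "\<dots> \<le> P n * (\<sigma>*r/(1-q)) + P n * (1/(\<sigma>*r)/(1-q))"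
    using head tail by (rule add_mono)
  also have "\<dots> = P n * ((\<sigma>*r + 1/(\<sigma>*r))/(1-q))"
    by (simp only: add_divide_distrib distrib_left)
  also have "\<dots> = C * ((\<sigma>*r + 1/(\<sigma>*r))/(1-q)) * \<sigma>^n * r^(n^2)"
    by (simp only: P_def mult_ac)
  finally show "norm (qgauss_qD_coeffs q b n) \<le> C * ((\<sigma>*r + 1/(\<sigma>*r))/(1-q)) * \<sigma>^n * r^(n^2)" .
qed

lemma qD_funpow_qgauss_mult:
  assumes q: "0 < q" "q < 1" and sm: "\<And>e y. summable (\<lambda>n. (qgauss_qD_coeffs q ^^ e) a n * y^n)"
    and F: "\<forall>x\<in>strip. F x = pseries a x * qgauss q x"
  shows "x \<in> strip \<Longrightarrow> x \<noteq> 0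
    \<Longrightarrow> (qD q ^^ e) F x = qgauss q x * pseries ((qgauss_qD_coeffs q ^^ e) a) x"
proof (induction e arbitrary: x)
  case 0 then show ?case using F by (simp add: mult.commute)
next
  case (Suc e)
  let ?b = "(qgauss_qD_coeffs q ^^ e) a"
  let ?qx = "complex_of_real q * x"
  have qx: "?qx \<in> strip" "?qx \<noteq> 0" using strip_mult_q[OF q Suc.prems(1)] Suc.prems q by auto
  have "(qD q ^^ Suc e) F x = ((qD q ^^ e) F x - (qD q ^^ e) F ?qx) / (complex_of_real (1 - q) * x)"
    using Suc.prems by (simp add: qD_def)
  also have "\<dots> = (qgauss q x * pseries ?b x - qgauss q ?qx * pseries ?b ?qx)
      / (complex_of_real (1 - q) * x)"
    using Suc.IH[OF Suc.prems] Suc.IH[OF qx] by simp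
  also have "\<dots> = qgauss q x * ((pseries ?b x - (1 + x^2) * pseries ?b ?qx)
      / (complex_of_real (1 - q) * x))"
    using qgauss_mult_q[OF q Suc.prems(1)] by (simp add: algebra_simps diff_divide_distrib)
  also have "(pseries ?b x - (1 + x^2) * pseries ?b ?qx) / (complex_of_real (1 - q) * x)
      = pseries (qgauss_qD_coeffs q ?b) x"
    using pseries_qgauss_qD_coeffs[OF q Suc.prems(2) sm] q Suc.prems by (simp add: field_simps)
  finally show ?case by simp
qed

lemma qD_eq_0_on_strip:
  assumes q: "0 < q" "q < 1" and h: "\<forall>x\<in>strip. h x = 0" and x: "x \<in> strip"
  shows "qD q h x = 0"
proof (cases "x = 0")
  case False
  then show ?thesis using h x strip_mult_q[OF q x] by (simp add: qD_def)
next
  case True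
  have "\<forall>\<^sub>F y in at 0. (h y - h (complex_of_real q * y)) / (complex_of_real (1 - q) * y) = 0"
    unfolding eventually_at using h strip_mult_q[OF q] norm_less_1_imp_strip
    by (intro exI[of _ 1]) auto
  then have "Lim (at 0) (\<lambda>y. (h y - h (complex_of_real q * y)) / (complex_of_real (1 - q) * y)) = 0"
    by (rule tendsto_Lim[OF trivial_limit_at tendsto_eventually])
  then show ?thesis using True by (simp add: qD_def)
qed

lemma qD_funpow_eq_0_on_strip:
  assumes q: "0 < q" "q < 1" and h: "\<forall>x\<in>strip. h x = 0"
  shows "\<forall>x\<in>strip. (qD q ^^ e) h x = 0"
  by (induction e) (simp_all add: h qD_eq_0_on_strip[OF q])

section \<open>The q-derivative at the poles of the q-Gaussian\<close>

definition qpole :: "real \<Rightarrow> real \<Rightarrow> nat \<Rightarrow> complex" where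
  "qpole q \<epsilon> k = complex_of_real (\<epsilon> / q^k) * \<i>"

text \<open>At \<open>k = 0\<close> the coefficient \<open>1 - 1/q^0\<close> vanishes, so the truncated index
  \<open>k - 1\<close> is harmless.\<close>

definition pole_op :: "real \<Rightarrow> real \<Rightarrow> (nat \<Rightarrow> complex) \<Rightarrow> nat \<Rightarrow> complex" where
  "pole_op q \<epsilon> w k = (w k - complex_of_real (1 - 1/q^(2*k)) * w (k-1))
      / (complex_of_real (1-q) * qpole q \<epsilon> k)"

definition pole_op_diag :: "real \<Rightarrow> real \<Rightarrow> nat \<Rightarrow> complex" where
  "pole_op_diag q \<epsilon> k = 1 / (complex_of_real (1-q) * qpole q \<epsilon> k)"

definition growth_bound :: "real \<Rightarrow> real \<Rightarrow> real \<Rightarrow> (nat \<Rightarrow> complex) \<Rightarrow> bool" where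
  "growth_bound r \<sigma> K w \<longleftrightarrow> (\<forall>k. norm (w k) \<le> K * \<sigma>^k / r^(k^2))"

definition op_powser ::
    "(nat \<Rightarrow> complex) \<Rightarrow> ((nat \<Rightarrow> complex) \<Rightarrow> nat \<Rightarrow> complex) \<Rightarrow> (nat \<Rightarrow> complex) \<Rightarrow> nat \<Rightarrow> complex"
  where "op_powser m T u k = (\<Sum>e. m e * (T ^^ e) u k)"

lemma growth_bound_nonneg: "growth_bound r \<sigma> K w \<Longrightarrow> K \<ge> 0"
  unfolding growth_bound_def by (metis div_by_1 norm_ge_zero order_trans power_0 mult_1_right zero_power2)

lemma bounded_expanding_eq_0:
  fixes \<rho> :: "nat \<Rightarrow> real"
  assumes \<rho>0: "\<And>j. 0 \<le> \<rho> j" and \<rho>K: "\<And>j. \<rho> j \<le> K" and c: "1 < c"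
    and grow: "\<And>j. J \<le> j \<Longrightarrow> c * \<rho> j \<le> \<rho> (Suc j)" and j: "J \<le> j"
  shows "\<rho> j = 0"
proof (rule ccontr)
  assume "\<rho> j \<noteq> 0"
  then have pos: "\<rho> j > 0" using \<rho>0[of j] by simp
  have pw: "c^n * \<rho> j \<le> \<rho> (j + n)" for n
  proof (induction n)
    case (Suc n)
    have "c^(Suc n) * \<rho> j \<le> c * \<rho> (j + n)" using Suc c by simp
    also have "\<dots> \<le> \<rho> (j + Suc n)" using grow[of "j + n"] j by simp
    finally show ?case .
  qed simp
  obtain n where "K / \<rho> j < c^n" using real_arch_pow[OF c] by blast
  then have "K < c^n * \<rho> j" using pos by (simp add: field_simps)
  with pw[of n] \<rho>K[of "j + n"] show False by simp
qed

locale pole_chain =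
  fixes q \<epsilon> :: real
  assumes q0: "0 < q" and q1: "q < 1" and eps: "\<epsilon> = 1 \<or> \<epsilon> = -1"
begin

lemma qpole_nonzero: "qpole q \<epsilon> k \<noteq> 0"
  using eps q0 by (auto simp: qpole_def)

lemma norm_qpole: "norm (qpole q \<epsilon> k) = 1 / q^k"
  using eps q0 by (auto simp: qpole_def norm_mult norm_divide norm_power)

lemma q_mult_qpole: "k \<ge> 1 \<Longrightarrow> complex_of_real q * qpole q \<epsilon> k = qpole q \<epsilon> (k-1)"
  using q0 by (cases k) (auto simp: qpole_def field_simps)

lemma one_plus_qpole_square: "1 + (qpole q \<epsilon> k)^2 = complex_of_real (1 - 1/q^(2*k))"
proof -
  have "(qpole q \<epsilon> k)^2 = complex_of_real ((\<epsilon> / q^k)^2) * \<i>^2"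
    by (simp only: qpole_def power_mult_distrib of_real_power)
  moreover have "(\<epsilon> / q^k)^2 = 1 / q^(2*k)"
    using eps by (auto simp: power_divide power_mult[symmetric] mult.commute)
  ultimately show ?thesis by simp
qed

lemma pseries_qgauss_qD_coeffs_at_qpole:
  assumes sm: "\<And>y. summable (\<lambda>n. b n * y^n)"
  shows "pseries (qgauss_qD_coeffs q b) (qpole q \<epsilon> k) = pole_op q \<epsilon> (\<lambda>j. pseries b (qpole q \<epsilon> j)) k"
proof -
  have "(1 + (qpole q \<epsilon> k)^2) * pseries b (complex_of_real q * qpole q \<epsilon> k)
      = complex_of_real (1 - 1/q^(2*k)) * pseries b (qpole q \<epsilon> (k-1))"
    by (cases "k = 0") (simp_all add: one_plus_qpole_square q_mult_qpole)
  moreover have "complex_of_real (1-q) * qpole q \<epsilon> k \<noteq> 0" using qpole_nonzero q1 by simp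
  ultimately show ?thesis
    using pseries_qgauss_qD_coeffs[OF q0 q1 qpole_nonzero sm, of k]
    unfolding pole_op_def by (metis nonzero_eq_divide_eq mult.commute)
qed

lemma pole_op_diff: "pole_op q \<epsilon> (\<lambda>k. v k - d * w k) k = pole_op q \<epsilon> v k - d * pole_op q \<epsilon> w k"
proof -
  let ?c = "complex_of_real (1 - 1/q^(2*k))"
  have "v k - d * w k - ?c * (v (k-1) - d * w (k-1)) = (v k - ?c * v (k-1)) - d * (w k - ?c * w (k-1))"
    by (simp add: algebra_simps)
  then show ?thesis
    unfolding pole_op_def by (simp only: diff_divide_distrib times_divide_eq_right right_diff_distrib)
qed

lemma funpow_pole_op_minus_diag:
  "(pole_op q \<epsilon> ^^ e) (\<lambda>k. pole_op q \<epsilon> u k - d * u k)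
    = (\<lambda>k. pole_op q \<epsilon> ((pole_op q \<epsilon> ^^ e) u) k - d * (pole_op q \<epsilon> ^^ e) u k)"
  by (induction e) (simp_all add: pole_op_diff)

lemma funpow_pole_op_vanishing_below:
  assumes "\<forall>j<k. u j = 0"
  shows "(\<forall>j<k. (pole_op q \<epsilon> ^^ e) u j = 0)
    \<and> (pole_op q \<epsilon> ^^ e) u k = pole_op_diag q \<epsilon> k ^ e * u k"
proof (induction e)
  case 0 then show ?case using assms by simp
next
  case (Suc e)
  let ?v = "(pole_op q \<epsilon> ^^ e) u"
  have v0: "\<forall>j<k. ?v j = 0" and vk: "?v k = pole_op_diag q \<epsilon> k ^ e * u k" using Suc by auto
  have "\<forall>j<k. pole_op q \<epsilon> ?v j = 0"
    using v0 by (auto simp: pole_op_def)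
  moreover have "pole_op q \<epsilon> ?v k = pole_op_diag q \<epsilon> k * ?v k"
    using v0 by (cases "k = 0") (auto simp: pole_op_def pole_op_diag_def)
  ultimately show ?case using vk by simp
qed

lemma growth_bound_pole_op:
  assumes r: "0 < r" "r^2 = q" and \<sigma>: "0 < \<sigma>" and w: "growth_bound r \<sigma> K w"
  shows "growth_bound r \<sigma> (K * ((1 + 1/(r*\<sigma>))/(1-q))) (pole_op q \<epsilon> w)"
  unfolding growth_bound_def
proof
  fix k
  define P where "P k = K * \<sigma>^k / r^(k^2)" for k
  have wP: "norm (w k) \<le> P k" for k using w by (simp add: growth_bound_def P_def)
  have P0: "P k \<ge> 0" for k using growth_bound_nonneg[OF w] \<sigma> r by (simp add: P_def)
  have qk: "q^k \<le> 1" "0 < q^k" using q0 q1 by (auto simp: power_le_one)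
  have main: "norm (w k - complex_of_real (1 - 1/q^(2*k)) * w (k-1)) * q^k \<le> P k * (1 + 1/(r*\<sigma>))"
  proof (cases k)
    case 0
    then have "norm (w k - complex_of_real (1 - 1/q^(2*k)) * w (k-1)) * q^k \<le> P 0"
      using wP[of 0] by simp
    also have "\<dots> \<le> P 0 * (1 + 1/(r*\<sigma>))" using P0[of 0] r \<sigma> by (simp add: mult_le_cancel_left1)
    finally show ?thesis using 0 by simp
  next
    case (Suc m)
    have qq: "q^(2*k) = q^k * q^k" by (simp add: power_add[symmetric] mult_2)
    have "q^(2*k) \<le> 1" "0 < q^(2*k)" using q0 q1 by (auto simp: power_le_one)
    then have "\<bar>1 - 1/q^(2*k)\<bar> \<le> 1/q^(2*k)" by simp
    then have c: "norm (complex_of_real (1 - 1/q^(2*k))) \<le> 1/q^k * (1/q^k)"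
      unfolding norm_of_real qq by simp
    have "norm (w k - complex_of_real (1 - 1/q^(2*k)) * w (k-1))
        \<le> norm (w k) + norm (complex_of_real (1 - 1/q^(2*k))) * norm (w m)"
      using norm_triangle_ineq4[of "w k" "complex_of_real (1 - 1/q^(2*k)) * w (k-1)"] Suc
      by (simp add: norm_mult)
    also have "\<dots> \<le> norm (w k) + 1/q^k * (1/q^k) * norm (w m)"
      using c by (intro add_left_mono mult_right_mono) auto
    finally have "norm (w k - complex_of_real (1 - 1/q^(2*k)) * w (k-1)) * q^k
        \<le> (norm (w k) + 1/q^k * (1/q^k) * norm (w m)) * q^k"
      using qk by (intro mult_right_mono) auto
    also have "\<dots> = norm (w k) * q^k + norm (w m) / q^k"
      using qk by (simp add: field_simps)
    also have "\<dots> \<le> P k * 1 + P m / q^k"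
      using wP[of k] wP[of m] qk norm_ge_zero[of "w k"]
      by (intro add_mono divide_right_mono) (auto intro: mult_le_one order_trans[OF mult_right_le_one_le])
    also have "P m / q^k = P k * (1/(r*\<sigma>))"
      using r \<sigma> Suc
      by (simp add: P_def power_Suc_square power_mult[symmetric] flip: r(2))
         (simp add: field_simps power_mult_distrib power_add mult_2 power2_eq_square)
    finally show ?thesis by (simp add: distrib_left)
  qed
  have "norm (pole_op q \<epsilon> w k) = norm (w k - complex_of_real (1 - 1/q^(2*k)) * w (k-1)) * q^k / (1-q)"
    unfolding pole_op_def norm_divide norm_mult norm_of_real norm_qpole using q0 q1 by simp
  also have "\<dots> \<le> P k * (1 + 1/(r*\<sigma>)) / (1-q)"
    using main q1 by (simp add: divide_right_mono)
  also have "\<dots> = K * ((1 + 1/(r*\<sigma>))/(1-q)) * \<sigma>^k / r^(k^2)"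
    by (simp add: P_def mult_ac)
  finally show "norm (pole_op q \<epsilon> w k) \<le> K * ((1 + 1/(r*\<sigma>))/(1-q)) * \<sigma>^k / r^(k^2)" .
qed

lemma growth_bound_funpow_pole_op:
  assumes r: "0 < r" "r^2 = q" and \<sigma>: "0 < \<sigma>" and u: "growth_bound r \<sigma> K u"
  shows "growth_bound r \<sigma> (K * ((1 + 1/(r*\<sigma>))/(1-q))^e) ((pole_op q \<epsilon> ^^ e) u)"
proof (induction e)
  case (Suc e)
  show ?case using growth_bound_pole_op[OF r \<sigma> Suc] by (simp add: mult_ac)
qed (use u in simp)

lemma growth_bound_pole_op_minus_diag:
  assumes r: "0 < r" "r^2 = q" and \<sigma>: "0 < \<sigma>" and u: "growth_bound r \<sigma> K u"
  shows "\<exists>K'. growth_bound r \<sigma> K' (\<lambda>k. pole_op q \<epsilon> u k - d * u k)"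
proof (intro exI, unfold growth_bound_def, rule allI)
  fix k
  let ?K = "K * ((1 + 1/(r*\<sigma>))/(1-q))"
  have "norm (pole_op q \<epsilon> u k - d * u k) \<le> norm (pole_op q \<epsilon> u k) + norm d * norm (u k)"
    using norm_triangle_ineq4[of "pole_op q \<epsilon> u k" "d * u k"] by (simp add: norm_mult)
  also have "\<dots> \<le> ?K * \<sigma>^k / r^(k^2) + norm d * (K * \<sigma>^k / r^(k^2))"
    using growth_bound_pole_op[OF r \<sigma> u] u unfolding growth_bound_def
    by (intro add_mono mult_left_mono) auto
  also have "\<dots> = (?K + norm d * K) * \<sigma>^k / r^(k^2)"
    by (simp add: add_divide_distrib distrib_right mult.assoc)
  finally show "norm (pole_op q \<epsilon> u k - d * u k) \<le> (?K + norm d * K) * \<sigma>^k / r^(k^2)" .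
qed

lemma summable_op_powser_pole_op:
  assumes r: "0 < r" "r^2 = q" and \<sigma>: "0 < \<sigma>" and u: "growth_bound r \<sigma> K u"
    and m: "\<And>c. c \<ge> 0 \<Longrightarrow> summable (\<lambda>e. norm (m e) * c^e)"
  shows "summable (\<lambda>e. m e * (pole_op q \<epsilon> ^^ e) u k)"
proof (rule summable_comparison_test')
  let ?c = "(1 + 1/(r*\<sigma>))/(1-q)"
  have "?c \<ge> 0" using r \<sigma> q1 by simp
  then show "summable (\<lambda>e. norm (m e) * ?c^e * (K * \<sigma>^k / r^(k^2)))"
    by (rule summable_mult2[OF m])
  fix e
  have "norm ((pole_op q \<epsilon> ^^ e) u k) \<le> K * ?c^e * \<sigma>^k / r^(k^2)"
    using growth_bound_funpow_pole_op[OF r \<sigma> u, of e] unfolding growth_bound_def by blast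
  then have "norm (m e) * norm ((pole_op q \<epsilon> ^^ e) u k) \<le> norm (m e) * (K * ?c^e * \<sigma>^k / r^(k^2))"
    by (rule mult_left_mono) simp
  then show "norm (m e * (pole_op q \<epsilon> ^^ e) u k) \<le> norm (m e) * ?c^e * (K * \<sigma>^k / r^(k^2))"
    by (simp add: norm_mult mult_ac)
qed

lemma op_powser_pole_op_minus_diag:
  assumes r: "0 < r" "r^2 = q" and \<sigma>: "0 < \<sigma>" and u: "growth_bound r \<sigma> K u"
    and m: "\<And>c. c \<ge> 0 \<Longrightarrow> summable (\<lambda>e. norm (m e) * c^e)"
  shows "op_powser m (pole_op q \<epsilon>) (\<lambda>k. pole_op q \<epsilon> u k - d * u k) k
       = pole_op q \<epsilon> (op_powser m (pole_op q \<epsilon>) u) k - d * op_powser m (pole_op q \<epsilon>) u k"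
proof -
  let ?A = "\<lambda>e. (pole_op q \<epsilon> ^^ e) u"
  let ?M = "op_powser m (pole_op q \<epsilon>) u"
  let ?c = "complex_of_real (1 - 1/q^(2*k))"
  let ?Z = "complex_of_real (1-q) * qpole q \<epsilon> k"
  have S: "(\<lambda>e. m e * ?A e j) sums ?M j" for j
    unfolding op_powser_def by (rule summable_sums[OF summable_op_powser_pole_op[OF r \<sigma> u m]])
  have "(\<lambda>e. (m e * ?A e k - ?c * (m e * ?A e (k-1))) / ?Z - d * (m e * ?A e k))
      sums ((?M k - ?c * ?M (k-1)) / ?Z - d * ?M k)"
    by (intro sums_diff sums_divide sums_mult S)
  moreover have "(m e * ?A e k - ?c * (m e * ?A e (k-1))) / ?Z - d * (m e * ?A e k)
      = m e * (pole_op q \<epsilon> (?A e) k - d * ?A e k)" for e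
    unfolding pole_op_def by (simp add: algebra_simps diff_divide_distrib)
  ultimately show ?thesis
    unfolding op_powser_def funpow_pole_op_minus_diag by (simp add: sums_iff pole_op_def)
qed

lemma pole_op_eigen_recurrence:
  assumes eig: "\<And>k. pole_op q \<epsilon> u k = pole_op_diag q \<epsilon> p * u k"
  shows "u j * complex_of_real (1 - q^p/q^j) = complex_of_real (1 - 1/q^(2*j)) * u (j-1)"
proof -
  have Z: "complex_of_real (1-q) * qpole q \<epsilon> i \<noteq> 0" for i using qpole_nonzero q1 by simp
  have "(complex_of_real (1-q) * qpole q \<epsilon> j) / (complex_of_real (1-q) * qpole q \<epsilon> p)
      = complex_of_real (q^p / q^j)"
    using eps q0 q1 by (auto simp: qpole_def)
  moreover have "u j - complex_of_real (1 - 1/q^(2*j)) * u (j-1)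
      = u j * ((complex_of_real (1-q) * qpole q \<epsilon> j) / (complex_of_real (1-q) * qpole q \<epsilon> p))"
    using eig[of j] Z[of j] Z[of p] by (simp add: pole_op_def pole_op_diag_def field_simps)
  ultimately show ?thesis by (simp add: algebra_simps)
qed

lemma pole_op_eigen_vanishes_downward:
  assumes eig: "\<And>k. pole_op q \<epsilon> u k = pole_op_diag q \<epsilon> p * u k" and "u (Suc j) = 0"
  shows "u j = 0"
proof -
  have "q^(2 * Suc j) < 1" "0 < q^(2 * Suc j)"
    using q0 q1 power_strict_decreasing[of 0 "2 * Suc j" q] by simp_all
  then have "1 < 1/q^(2 * Suc j)" by simp
  then have "complex_of_real (1 - 1/q^(2 * Suc j)) \<noteq> 0" by (metis of_real_eq_0_iff less_irrefl eq_iff_diff_eq_0)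
  moreover have "complex_of_real (1 - 1/q^(2 * Suc j)) * u j = 0"
    using pole_op_eigen_recurrence[OF eig, of "Suc j"] assms(2) by simp
  ultimately show ?thesis by (metis mult_eq_0_iff)
qed

lemma pole_op_eigen_norm_growth:
  assumes eig: "\<And>k. pole_op q \<epsilon> u k = pole_op_diag q \<epsilon> p * u k" and "p < j"
  shows "(1/q^j - q^j) * norm (u (j-1)) \<le> norm (u j)"
proof -
  have qp: "0 < q^i" "q^i \<le> 1" for i using q0 q1 by (auto simp: power_le_one)
  have qq: "q^(2*j) = q^j * q^j" "q^(j*2) = q^j * q^j"
    by (simp_all add: power_add[symmetric] mult_2 mult_2_right)
  have "q^j < q^p" using \<open>p < j\<close> q0 q1 by (intro power_strict_decreasing) auto
  then have "q^p / q^j > 1" using qp by simp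
  moreover have "q^p / q^j \<le> 1 / q^j" using qp[of p] qp[of j] by (intro divide_right_mono) auto
  ultimately have "\<bar>1 - q^p/q^j\<bar> \<le> 1/q^j" by simp
  moreover have "\<bar>1 - 1/q^(2*j)\<bar> = 1/q^(2*j) - 1"
    using qp[of "2*j"] by (simp add: field_simps)
  moreover have "norm (u j) * \<bar>1 - q^p/q^j\<bar> = \<bar>1 - 1/q^(2*j)\<bar> * norm (u (j-1))"
    using arg_cong[OF pole_op_eigen_recurrence[OF eig, of j], of norm]
    by (simp only: norm_mult norm_of_real)
  ultimately have "(1/q^(2*j) - 1) * norm (u (j-1)) \<le> norm (u j) * (1/q^j)"
    by (metis mult_left_mono norm_ge_zero)
  then have "q^j * ((1/q^(2*j) - 1) * norm (u (j-1))) \<le> q^j * (norm (u j) * (1/q^j))"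
    using qp[of j] by (intro mult_left_mono) auto
  also have "q^j * (norm (u j) * (1/q^j)) = norm (u j)" using q0 by simp
  finally have "q^j * ((1/q^(2*j) - 1) * norm (u (j-1))) \<le> norm (u j)" .
  moreover have "q^j * (1/q^(2*j) - 1) = 1/q^j - q^j"
    using qp[of j] by (simp add: qq field_simps)
  ultimately show ?thesis by (simp add: mult.assoc[symmetric])
qed

lemma pole_op_eigen_weighted_growth:
  assumes r: "0 < r" "r^2 = q" and \<sigma>: "0 < \<sigma>"
    and eig: "\<And>k. pole_op q \<epsilon> u k = pole_op_diag q \<epsilon> p * u k" and "p < Suc j"
  shows "(1 - q^(2*Suc j)) / (r*\<sigma>) * (norm (u j) * r^(j^2) / \<sigma>^j)
    \<le> norm (u (Suc j)) * r^((Suc j)^2) / \<sigma>^(Suc j)"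
proof -
  have qr: "q^(Suc j) = r^(2*j) * r^2"
    by (simp flip: r(2) add: power_mult[symmetric] power_add[symmetric] mult.commute)
  have q2: "q^(2*Suc j) = q^(Suc j) * q^(Suc j)" by (simp add: power_add[symmetric] mult_2)
  have qrr: "q = r * r" using r(2) by (simp add: power2_eq_square)
  have "(1 - q^(2*Suc j)) / (r*\<sigma>) * (norm (u j) * r^(j^2) / \<sigma>^j)
      = (1/q^(Suc j) - q^(Suc j)) * norm (u j) * r^((Suc j)^2) / \<sigma>^(Suc j)"
    unfolding power_Suc_square q2 qr using r \<sigma> by (simp add: field_simps power2_eq_square qrr)
  also have "\<dots> \<le> norm (u (Suc j)) * r^((Suc j)^2) / \<sigma>^(Suc j)"
    using pole_op_eigen_norm_growth[OF eig \<open>p < Suc j\<close>] r \<sigma>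
    by (intro divide_right_mono mult_right_mono) auto
  finally show ?thesis .
qed

lemma pole_op_eigen_eq_0:
  assumes r: "0 < r" "r^2 = q" and \<sigma>: "0 < \<sigma>" "r * \<sigma> < 1" and u: "growth_bound r \<sigma> K u"
    and eig: "\<And>k. pole_op q \<epsilon> u k = pole_op_diag q \<epsilon> p * u k"
  shows "u k = 0"
proof -
  define \<rho> where "\<rho> j = norm (u j) * r^(j^2) / \<sigma>^j" for j
  define \<theta> where "\<theta> = 1/(r*\<sigma>)"
  have \<theta>1: "\<theta> > 1" using \<sigma> r by (simp add: \<theta>_def)
  obtain J where J: "q^J < (\<theta>-1)/(2*\<theta>)"
    using real_arch_pow_inv[of "(\<theta>-1)/(2*\<theta>)" q] \<theta>1 q1 by auto
  have \<rho>_nonneg: "0 \<le> \<rho> j" for j using r \<sigma> by (simp add: \<rho>_def)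
  have \<rho>_bounded: "\<rho> j \<le> K" for j
    using u \<sigma> r unfolding growth_bound_def \<rho>_def by (simp add: field_simps)
  have \<rho>_grow: "(1+\<theta>)/2 * \<rho> j \<le> \<rho> (Suc j)" if "max p J \<le> j" for j
  proof -
    have "q^(2*Suc j) \<le> q^J" using that q0 q1 by (intro power_decreasing) auto
    then have "(1 - (\<theta>-1)/(2*\<theta>)) * \<theta> \<le> (1 - q^(2*Suc j)) * \<theta>"
      using J \<theta>1 by (intro mult_right_mono) auto
    moreover have "(1 - (\<theta>-1)/(2*\<theta>)) * \<theta> = (1+\<theta>)/2" using \<theta>1 by (simp add: field_simps)
    ultimately have "(1+\<theta>)/2 \<le> (1 - q^(2*Suc j)) * \<theta>" by simp
    then have "(1+\<theta>)/2 * \<rho> j \<le> (1 - q^(2*Suc j)) * \<theta> * \<rho> j"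
      by (rule mult_right_mono) (rule \<rho>_nonneg)
    also have "\<dots> = (1 - q^(2*Suc j)) / (r*\<sigma>) * \<rho> j" by (simp add: \<theta>_def)
    also have "\<dots> \<le> \<rho> (Suc j)"
      unfolding \<rho>_def using that by (intro pole_op_eigen_weighted_growth[OF r \<sigma>(1) eig]) auto
    finally show ?thesis .
  qed
  have "1 < (1+\<theta>)/2" using \<theta>1 by simp
  from bounded_expanding_eq_0[of \<rho> K "(1+\<theta>)/2" "max p J", OF \<rho>_nonneg \<rho>_bounded this \<rho>_grow]
  have top: "u j = 0" if "max p J \<le> j" for j
    using that r \<sigma> by (simp add: \<rho>_def)
  show "u k = 0"
  proof (induction "max p J - k" arbitrary: k)
    case 0 then show ?case using top by simp
  next
    case (Suc d)
    then have "u (Suc k) = 0" by simp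
    then show ?case by (rule pole_op_eigen_vanishes_downward[OF eig])
  qed
qed

lemma op_powser_pole_op_eq_0_if_vanishing_below:
  assumes m: "\<And>c. c \<ge> 0 \<Longrightarrow> summable (\<lambda>e. norm (m e) * c^e)"
    and M0: "\<And>k. op_powser m (pole_op q \<epsilon>) u k = 0"
    and N: "\<And>k. k \<ge> N \<Longrightarrow> (\<Sum>e. m e * pole_op_diag q \<epsilon> k ^ e) \<noteq> 0"
    and below: "\<forall>k<N. u k = 0"
  shows "u k = 0"
proof (induction k rule: less_induct)
  case (less k)
  show ?case
  proof (cases "k < N")
    case True then show ?thesis using below by blast
  next
    case False
    have "summable (\<lambda>e. m e * pole_op_diag q \<epsilon> k ^ e)"
      by (rule summable_comparison_test'[OF m[of "norm (pole_op_diag q \<epsilon> k)"]])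
         (auto simp: norm_mult norm_power)
    moreover have "(pole_op q \<epsilon> ^^ e) u k = pole_op_diag q \<epsilon> k ^ e * u k" for e
      using funpow_pole_op_vanishing_below[of k u e] less.IH by blast
    ultimately have "0 = (\<Sum>e. m e * pole_op_diag q \<epsilon> k ^ e) * u k"
      using M0[of k] unfolding op_powser_def by (simp add: suminf_mult2 mult.assoc)
    then show ?thesis using N[of k] False by simp
  qed
qed

lemma op_powser_pole_op_eq_0_imp_eq_0:
  assumes r: "0 < r" "r^2 = q" and \<sigma>: "0 < \<sigma>" "r * \<sigma> < 1" and w: "growth_bound r \<sigma> K w"
    and m: "\<And>c. c \<ge> 0 \<Longrightarrow> summable (\<lambda>e. norm (m e) * c^e)"
    and M0: "\<And>k. op_powser m (pole_op q \<epsilon>) w k = 0"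
    and N: "\<And>k. k \<ge> N \<Longrightarrow> (\<Sum>e. m e * pole_op_diag q \<epsilon> k ^ e) \<noteq> 0"
  shows "w k = 0"
proof -
  have "w k = 0" if "\<forall>k<j. w k = 0" for j
    using w M0 that
  proof (induction "N - j" arbitrary: w K j k)
    case 0
    then have "\<And>k. op_powser m (pole_op q \<epsilon>) w k = 0" "\<forall>k<N. w k = 0" by auto
    then show ?case using op_powser_pole_op_eq_0_if_vanishing_below[OF m _ N] by blast
  next
    case (Suc d)
    define w' where "w' k = pole_op q \<epsilon> w k - pole_op_diag q \<epsilon> j * w k" for k
    obtain K' where K': "growth_bound r \<sigma> K' w'"
      using growth_bound_pole_op_minus_diag[OF r \<sigma>(1) Suc.prems(1), of "pole_op_diag q \<epsilon> j"]
      unfolding w'_def by blast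
    have "op_powser m (pole_op q \<epsilon>) w' k
        = pole_op q \<epsilon> (op_powser m (pole_op q \<epsilon>) w) k
          - pole_op_diag q \<epsilon> j * op_powser m (pole_op q \<epsilon>) w k" for k
      unfolding w'_def by (rule op_powser_pole_op_minus_diag[OF r \<sigma>(1) Suc.prems(1) m])
    then have "op_powser m (pole_op q \<epsilon>) w' k = 0" for k
      using Suc.prems(2) by (simp add: pole_op_def)
    moreover have "\<forall>k<Suc j. w' k = 0"
      using funpow_pole_op_vanishing_below[of j w 1] Suc.prems(3) by (auto simp: w'_def less_Suc_eq)
    ultimately have "w' k = 0" for k
      using Suc.hyps(1)[of "Suc j" K' w'] Suc.hyps(2) K' by simp
    then have "pole_op q \<epsilon> w k = pole_op_diag q \<epsilon> j * w k" for k
      by (simp add: w'_def)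
    then show ?case by (rule pole_op_eigen_eq_0[OF r \<sigma> Suc.prems(1)])
  qed
  then show ?thesis by blast
qed

lemma powser_pole_op_diag_eventually_nonzero:
  fixes m :: "nat \<Rightarrow> complex"
  assumes m: "\<And>z. summable (\<lambda>e. m e * z^e)" and nz: "m e0 \<noteq> 0"
  obtains N where "\<And>k. k \<ge> N \<Longrightarrow> (\<Sum>e. m e * pole_op_diag q \<epsilon> k ^ e) \<noteq> 0"
proof -
  obtain s where s: "s > 0" "\<And>z. z \<noteq> 0 \<Longrightarrow> norm z \<le> s \<Longrightarrow> (\<Sum>e. m e * z^e) \<noteq> 0"
    using entire_powser_nonzero_near_0[OF m nz] by blast
  obtain N where N: "q^N < s * (1-q)" using real_arch_pow_inv[of "s*(1-q)" q] q0 q1 s by auto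
  show ?thesis
  proof (rule that, rule s(2))
    fix k assume "N \<le> k"
    show "pole_op_diag q \<epsilon> k \<noteq> 0" using qpole_nonzero q1 by (simp add: pole_op_diag_def)
    have "norm (pole_op_diag q \<epsilon> k) = q^k/(1-q)"
      using q1 unfolding pole_op_diag_def norm_divide norm_mult norm_of_real norm_qpole by simp
    also have "\<dots> \<le> q^N/(1-q)"
      using \<open>N \<le> k\<close> q0 q1 by (intro divide_right_mono power_decreasing) auto
    also have "\<dots> \<le> s" using N q1 by (simp add: field_simps)
    finally show "norm (pole_op_diag q \<epsilon> k) \<le> s" .
  qed
qed

end

section \<open>Functions of quadratic-exponential decay at the poles\<close>

definition vanishes_at_qpoles :: "real \<Rightarrow> (nat \<Rightarrow> complex) \<Rightarrow> bool" where
  "vanishes_at_qpoles q a \<longleftrightarrow> (\<forall>k. pseries a (qpole q 1 k) = 0 \<and> pseries a (qpole q (-1) k) = 0)"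

lemma alternating_even_odd_coeffs_sums_0:
  fixes a :: "nat \<Rightarrow> complex"
  assumes sm: "\<And>y. summable (\<lambda>n. a n * y^n)" and z1: "pseries a \<i> = 0" and z2: "pseries a (-\<i>) = 0"
  shows "(\<lambda>j. (-1)^j * a (2*j)) sums 0" and "(\<lambda>j. (-1)^j * a (2*j+1)) sums 0"
proof -
  have S1: "(\<lambda>l. a l * \<i>^l) sums 0" using summable_sums[OF sm[of \<i>]] z1 by (simp add: pseries_def)
  have S2: "(\<lambda>l. a l * (-\<i>)^l) sums 0" using summable_sums[OF sm[of "-\<i>"]] z2 by (simp add: pseries_def)
  define fe where "fe l = (a l * \<i>^l + a l * (-\<i>)^l) / 2" for l
  define fo where "fo l = (a l * \<i>^l - a l * (-\<i>)^l) / (2*\<i>)" for l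
  have "fe sums ((0 + 0)/2)" unfolding fe_def by (intro sums_divide sums_add S1 S2)
  then have fe0: "fe sums 0" by simp
  have "fo sums ((0 - 0)/(2*\<i>))" unfolding fo_def by (intro sums_divide sums_diff S1 S2)
  then have fo0: "fo sums 0" by simp
  have ie: "\<i>^(2*j) = (-1)^j" "(-\<i>)^(2*j) = (-1)^j" for j :: nat
    by (simp_all add: power_mult)
  have "fe n = 0" if "n \<notin> range (\<lambda>j. 2*j)" for n
  proof -
    from that obtain j where "n = 2*j+1" by (metis evenE oddE rangeI)
    then show ?thesis by (simp add: fe_def ie)
  qed
  then have "(\<lambda>j. fe (2*j)) sums 0"
    by (subst sums_mono_reindex) (use fe0 in \<open>auto simp: strict_mono_def\<close>)
  then show "(\<lambda>j. (-1)^j * a (2*j)) sums 0" by (simp add: fe_def ie)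
  have "fo n = 0" if "n \<notin> range (\<lambda>j. 2*j+1)" for n
  proof -
    from that obtain j where "n = 2*j" by (metis evenE oddE rangeI)
    then show ?thesis by (simp add: fo_def ie)
  qed
  then have "(\<lambda>j. fo (2*j+1)) sums 0"
    by (subst sums_mono_reindex) (use fo0 in \<open>auto simp: strict_mono_def\<close>)
  moreover have "fo (2*j+1) = (-1)^j * a (2*j+1)" for j by (simp add: fo_def ie field_simps)
  ultimately show "(\<lambda>j. (-1)^j * a (2*j+1)) sums 0" by simp
qed

lemma alternating_tail_sums_bound:
  fixes a :: "nat \<Rightarrow> complex"
  assumes \<rho>: "0 < \<rho>" "\<rho> < 1" "\<rho>^4 \<le> q" and a: "decay_bound \<rho> (1/2) C a"
  obtains g where "(\<lambda>j. (-1)^j * a (n + 2*j + 2)) sums g"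
    and "norm g \<le> C * (1/2)^n * \<rho>^(n^2) * q^n / 3"
proof -
  have bound: "norm ((-1)^j * a (n + 2*j + 2)) \<le> C * (1/2)^n * \<rho>^(n^2) * q^n * (1/4)^(Suc j)" for j
  proof -
    have "norm ((-1)^j * a (n + 2*j + 2)) = norm (a (n + 2*j + 2))" by (simp add: norm_mult norm_power)
    also have "\<dots> \<le> C * (1/2)^(n + 2*j + 2) * \<rho>^((n + 2*j + 2)^2)"
      using a unfolding decay_bound_def by blast
    also have "\<dots> \<le> C * (1/2)^(n + 2*j + 2) * (\<rho>^(n^2) * q^n)"
    proof -
      have e: "n^2 + 4*n \<le> (n + 2*j + 2)^2" by (simp add: power2_eq_square algebra_simps)
      have "\<rho>^((n + 2*j + 2)^2) \<le> \<rho>^(n^2 + 4*n)" using \<rho> by (intro power_decreasing e) auto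
      also have "\<dots> = \<rho>^(n^2) * (\<rho>^4)^n" by (simp add: power_add power_mult)
      also have "\<dots> \<le> \<rho>^(n^2) * q^n" using \<rho> by (intro mult_left_mono power_mono) auto
      finally show ?thesis using decay_bound_nonneg[OF a] by (intro mult_left_mono) auto
    qed
    also have "\<dots> = C * (1/2)^n * \<rho>^(n^2) * q^n * (1/4)^(Suc j)"
    proof -
      have four: "((2::real)^j)^2 = 4^j" by (simp add: power2_eq_square power_mult_distrib[symmetric])
      show ?thesis by (simp add: power_add power_mult field_simps four)
    qed
    finally show ?thesis .
  qed
  have geo: "(\<lambda>j. (1/4::real)^(Suc j)) sums (1/3)"
    using sums_mult[OF geometric_sums[of "1/4::real"], of "1/4"] by simp
  have geo': "summable (\<lambda>j. C * (1/2)^n * \<rho>^(n^2) * q^n * (1/4::real)^(Suc j))"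
    by (rule summable_mult[OF sums_summable[OF geo]])
  have ns: "summable (\<lambda>j. norm ((-1)^j * a (n + 2*j + 2)))"
    by (rule summable_comparison_test'[OF geo']) (use bound in simp)
  show ?thesis
  proof (rule that)
    show "(\<lambda>j. (-1)^j * a (n + 2*j + 2)) sums (\<Sum>j. (-1)^j * a (n + 2*j + 2))"
      by (rule summable_sums[OF summable_norm_cancel[OF ns]])
    have "norm (\<Sum>j. (-1)^j * a (n + 2*j + 2)) \<le> (\<Sum>j. norm ((-1)^j * a (n + 2*j + 2)))"
      by (rule summable_norm[OF ns])
    also have "\<dots> \<le> (\<Sum>j. C * (1/2)^n * \<rho>^(n^2) * q^n * (1/4)^(Suc j))"
      by (rule suminf_le[OF bound ns geo'])
    also have "\<dots> = C * (1/2)^n * \<rho>^(n^2) * q^n * (1/3)"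
      using sums_unique[OF sums_mult[OF geo]] by simp
    finally show "norm (\<Sum>j. (-1)^j * a (n + 2*j + 2)) \<le> C * (1/2)^n * \<rho>^(n^2) * q^n / 3"
      by simp
  qed
qed

lemma pseries_one_plus_square_mult:
  assumes sm: "\<And>y. summable (\<lambda>n. g n * y^n)"
    and a: "\<And>n. a n = g n + (if n \<ge> 2 then g (n-2) else 0)"
  shows "pseries a y = (1 + y^2) * pseries g y"
proof -
  have S: "(\<lambda>n. g n * y^n) sums pseries g y" unfolding pseries_def by (rule summable_sums[OF sm])
  have "(\<lambda>i. y^2 * (g i * y^i)) sums (y^2 * pseries g y)" by (rule sums_mult[OF S])
  moreover have "y^2 * (g i * y^i) = (\<lambda>n. if n \<ge> 2 then g (n-2) * y^n else 0) (i+2)" for i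
    by (simp add: power_add mult_ac power2_eq_square)
  ultimately have "(\<lambda>i. (\<lambda>n. if n \<ge> 2 then g (n-2) * y^n else 0) (i+2)) sums (y^2 * pseries g y)"
    by simp
  then have "(\<lambda>n. if n \<ge> 2 then g (n-2) * y^n else 0) sums (y^2 * pseries g y)"
    by (subst (asm) sums_zero_iff_shift) auto
  from sums_add[OF S this]
  have "(\<lambda>n. g n * y^n + (if n \<ge> 2 then g (n-2) * y^n else 0)) sums (pseries g y + y^2 * pseries g y)" .
  moreover have "g n * y^n + (if n \<ge> 2 then g (n-2) * y^n else 0) = a n * y^n" for n
    using a[of n] by (simp add: algebra_simps)
  ultimately have "(\<lambda>n. a n * y^n) sums (pseries g y + y^2 * pseries g y)" by simp
  then show ?thesis unfolding pseries_def by (simp add: sums_iff algebra_simps)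
qed

lemma decay_bound_divide_one_plus_square:
  assumes q: "0 < q" and \<rho>: "0 < \<rho>" "\<rho> < 1" "\<rho>^4 \<le> q" and a: "decay_bound \<rho> (1/2) C a"
    and z: "pseries a \<i> = 0" "pseries a (-\<i>) = 0"
  obtains g where "\<And>n. norm (g n) \<le> C * (1/2)^n * \<rho>^(n^2) * q^n / 3" and "g 0 = a 0"
    and "\<And>y. pseries a y = (1 + y^2) * pseries g y"
proof -
  have sm: "\<And>y. summable (\<lambda>n. a n * y^n)" by (rule decay_bound_summable[OF \<rho>(1,2) _ a]) simp
  note EO = alternating_even_odd_coeffs_sums_0[OF sm z]
  define g where "g n = (\<Sum>j. (-1)^j * a (n + 2*j + 2))" for n
  have gs: "(\<lambda>j. (-1)^j * a (n + 2*j + 2)) sums g n"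
    and gb: "norm (g n) \<le> C * (1/2)^n * \<rho>^(n^2) * q^n / 3" for n
    using alternating_tail_sums_bound[OF \<rho> a, of n] unfolding g_def by (metis sums_unique)+
  have shift: "(\<lambda>j. (-1)^j * a (m + 2*j + 2)) sums (a m - b)"
    if "(\<lambda>j. (-1)^j * a (m + 2*j)) sums b" for m b
  proof -
    have "(\<lambda>j. (-1)^(Suc j) * a (m + 2 * Suc j)) sums (b - (-1)^0 * a (m + 2*0))"
      using that by (subst sums_Suc_iff) simp
    then have "(\<lambda>j. - ((-1)^j * a (m + 2*j + 2))) sums (b - a m)" by simp
    then show ?thesis using sums_minus by fastforce
  qed
  have g_rec: "g n = a (n+2) - g (n+2)" for n
  proof -
    have "(\<lambda>j. (-1)^j * a ((n+2) + 2*j)) = (\<lambda>j. (-1)^j * a (n + 2*j + 2))"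
      by (simp add: ac_simps)
    then have "g (n+2) = a (n+2) - g n"
      using shift[of "n+2" "g n"] gs[of n] gs[of "n+2"] sums_unique2 by metis
    then show ?thesis by simp
  qed
  have g0: "g 0 = a 0" using shift[of 0 0] EO(1) gs[of 0] sums_unique2 by simp
  have g1: "g 1 = a 1" using shift[of 1 0] EO(2) gs[of 1] sums_unique2 by (simp add: ac_simps)
  have a_eq: "a n = g n + (if n \<ge> 2 then g (n-2) else 0)" for n
  proof (cases "n \<ge> 2")
    case True
    then obtain m where "n = m + 2" by (metis add.commute le_add_diff_inverse)
    then show ?thesis using g_rec[of m] by simp
  next
    case False
    then have "n = 0 \<or> n = 1" by auto
    then show ?thesis using g0 g1 by auto
  qed
  have gsm: "summable (\<lambda>n. g n * y^n)" for y
  proof (rule summable_comparison_test'[OF summable_mult[OF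
        summable_power_mult_power_square[OF \<rho>(1,2), of "q * norm y / 2"], of "C/3"]])
    fix n
    have "norm (g n * y^n) \<le> C * (1/2)^n * \<rho>^(n^2) * q^n / 3 * norm y ^ n"
      unfolding norm_mult norm_power by (rule mult_right_mono[OF gb]) simp
    also have "\<dots> = C/3 * ((q * norm y / 2)^n * \<rho>^(n^2))"
      by (simp add: power_mult_distrib power_divide field_simps)
    finally show "norm (g n * y^n) \<le> C/3 * ((q * norm y / 2)^n * \<rho>^(n^2))" .
  qed (use q in simp)
  show ?thesis by (rule that[OF gb g0 pseries_one_plus_square_mult[OF gsm a_eq]])
qed

lemma vanishes_at_qpoles_step:
  assumes q: "0 < q" "q < 1" and \<rho>: "0 < \<rho>" "\<rho> < 1" "\<rho>^4 \<le> q"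
    and a: "decay_bound \<rho> (1/2) C a" and v: "vanishes_at_qpoles q a"
  obtains a' where "decay_bound \<rho> (1/2) (C/3) a'" "vanishes_at_qpoles q a'" "a' 0 = a 0"
proof -
  have "qpole q 1 0 = \<i>" "qpole q (-1) 0 = -\<i>" by (simp_all add: qpole_def)
  then have z: "pseries a \<i> = 0" "pseries a (-\<i>) = 0"
    using v unfolding vanishes_at_qpoles_def by metis+
  obtain g where gb: "\<And>n. norm (g n) \<le> C * (1/2)^n * \<rho>^(n^2) * q^n / 3" and g0: "g 0 = a 0"
    and fac: "\<And>y. pseries a y = (1 + y^2) * pseries g y"
    using decay_bound_divide_one_plus_square[OF q(1) \<rho> a z] by blast
  define a' where "a' n = g n / complex_of_real (q^n)" for n
  show ?thesis
  proof (rule that[of a'])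
    show "decay_bound \<rho> (1/2) (C/3) a'"
      unfolding decay_bound_def
    proof
      fix n
      have "norm (a' n) = norm (g n) / q^n" using q by (simp add: a'_def norm_divide norm_power)
      also have "\<dots> \<le> (C * (1/2)^n * \<rho>^(n^2) * q^n / 3) / q^n"
        using gb[of n] q by (intro divide_right_mono) auto
      also have "\<dots> = C/3 * (1/2)^n * \<rho>^(n^2)" using q by simp
      finally show "norm (a' n) \<le> C/3 * (1/2)^n * \<rho>^(n^2)" .
    qed
    show "a' 0 = a 0" by (simp add: a'_def g0)
    have "pseries a' (qpole q \<epsilon> k) = 0" if \<epsilon>: "\<epsilon> = 1 \<or> \<epsilon> = -1"
      and za: "pseries a (qpole q \<epsilon> (Suc k)) = 0" for \<epsilon> k
    proof -
      interpret pole_chain q \<epsilon> using q \<epsilon> by unfold_locales auto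
      have "pseries a' (qpole q \<epsilon> k) = pseries g (qpole q \<epsilon> (Suc k))"
        using q by (simp add: pseries_def a'_def qpole_def power_divide field_simps)
      moreover have "1 + (qpole q \<epsilon> (Suc k))^2 \<noteq> 0"
      proof -
        have "q^(2*Suc k) < 1" "0 < q^(2*Suc k)"
          using q power_strict_decreasing[of 0 "2 * Suc k" q] by simp_all
        then have "1 - 1/q^(2*Suc k) \<noteq> 0" by simp
        then show ?thesis unfolding one_plus_qpole_square of_real_eq_0_iff .
      qed
      ultimately show ?thesis using za fac by simp
    qed
    then show "vanishes_at_qpoles q a'" using v by (simp add: vanishes_at_qpoles_def)
  qed
qed

lemma vanishes_at_qpoles_coeff_0:
  assumes q: "0 < q" "q < 1" and \<rho>: "0 < \<rho>" "\<rho> < 1" "\<rho>^4 \<le> q"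
    and a: "decay_bound \<rho> (1/2) C a" and v: "vanishes_at_qpoles q a"
  shows "a 0 = 0"
proof (rule ccontr)
  have "\<exists>a'. decay_bound \<rho> (1/2) (C/3^m) a' \<and> vanishes_at_qpoles q a' \<and> a' 0 = a 0" for m
  proof (induction m)
    case (Suc m)
    then obtain a' where a': "decay_bound \<rho> (1/2) (C/3^m) a'" "vanishes_at_qpoles q a'" "a' 0 = a 0"
      by blast
    obtain a'' where "decay_bound \<rho> (1/2) (C/3^m/3) a''" "vanishes_at_qpoles q a''" "a'' 0 = a' 0"
      by (rule vanishes_at_qpoles_step[OF q \<rho> a'(1,2)])
    then show ?case using a'(3) by (auto simp: mult.commute)
  qed (use a v in auto)
  then have bound: "norm (a 0) \<le> C/3^m" for m
    unfolding decay_bound_def by (metis mult_1_right power_0 zero_power2)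
  assume "a 0 \<noteq> 0"
  then have pos: "norm (a 0) > 0" by simp
  obtain m where "C / norm (a 0) < 3^m" using real_arch_pow[of 3 "C / norm (a 0)"] by auto
  then have "C / 3^m < norm (a 0)" using pos by (simp add: field_simps)
  then show False using bound[of m] by simp
qed

lemma vanishes_at_qpoles_imp_eq_0:
  assumes q: "0 < q" "q < 1" and \<rho>: "0 < \<rho>" "\<rho> < 1" "\<rho>^4 \<le> q"
  shows "decay_bound \<rho> (1/2) C a \<Longrightarrow> vanishes_at_qpoles q a \<Longrightarrow> a n = 0"
proof (induction n arbitrary: a C)
  case 0 then show ?case using vanishes_at_qpoles_coeff_0[OF q \<rho>] by blast
next
  case (Suc n)
  have a0: "a 0 = 0" using vanishes_at_qpoles_coeff_0[OF q \<rho> Suc.prems] .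
  define b where "b l = a (Suc l)" for l
  have "decay_bound \<rho> (1/2) C b"
    unfolding decay_bound_def
  proof
    fix l
    have "norm (b l) \<le> C * (1/2)^(Suc l) * \<rho>^((Suc l)^2)"
      using Suc.prems(1) unfolding decay_bound_def b_def by blast
    also have "\<dots> \<le> C * (1/2)^l * \<rho>^(l^2)"
      using decay_bound_nonneg[OF Suc.prems(1)] \<rho>
      by (intro mult_mono mult_left_mono power_decreasing) (auto simp: power2_eq_square)
    finally show "norm (b l) \<le> C * (1/2)^l * \<rho>^(l^2)" .
  qed
  moreover have "vanishes_at_qpoles q b"
  proof -
    have sm: "summable (\<lambda>n. a n * y^n)" for y
      by (rule decay_bound_summable[OF \<rho>(1,2) _ Suc.prems(1)]) simp
    have "pseries b x = pseries a x / x" if "x \<noteq> 0" for x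
    proof -
      have "(\<lambda>l. a (Suc l) * x^(Suc l)) sums (pseries a x - a 0 * x^0)"
        using summable_sums[OF sm[of x]] unfolding pseries_def by (subst sums_Suc_iff) simp
      then have "(\<lambda>l. x * (b l * x^l)) sums pseries a x" using a0 by (simp add: b_def mult_ac)
      then have "(\<lambda>l. b l * x^l) sums (pseries a x / x)" by (rule sums_mult_D) (rule that)
      then show ?thesis unfolding pseries_def by (rule sums_unique[symmetric])
    qed
    moreover have "qpole q \<epsilon> k \<noteq> 0" if "\<epsilon> = 1 \<or> \<epsilon> = -1" for \<epsilon> k
      using that q by (auto simp: qpole_def)
    ultimately show ?thesis using Suc.prems(2) by (simp add: vanishes_at_qpoles_def)
  qed
  ultimately have "b n = 0" by (rule Suc.IH)
  then show ?case by (simp add: b_def)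
qed

lemma power_square_div_power_le:
  fixes r q \<sigma> \<sigma>' B :: real
  assumes r: "0 < r" "q = r^2" and \<sigma>: "0 < \<sigma>" "\<sigma> < \<sigma>'"
    and B: "\<And>n. (max \<sigma>' (1/\<sigma>'))^n * r^(n^2) \<le> B"
  shows "\<sigma>^l * r^(l^2) / q^(k*l) \<le> (\<sigma>/\<sigma>')^l * (B * \<sigma>'^k / r^(k^2))"
proof -
  define t where "t = max \<sigma>' (1/\<sigma>')"
  obtain d sd where ds: "l^2 + k^2 = d^2 + 2*(k*l)" "\<sigma>^l = (\<sigma>/\<sigma>')^l * \<sigma>'^k * sd"
    "0 \<le> sd" "sd \<le> t^d"
  proof (cases "k \<le> l")
    case True
    then obtain d where l: "l = k + d" by (metis le_add_diff_inverse)
    show ?thesis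
    proof (rule that[of d "\<sigma>'^d"])
      show "l^2 + k^2 = d^2 + 2*(k*l)" by (simp add: l power2_eq_square algebra_simps)
      have "\<sigma>'^k * \<sigma>'^d = \<sigma>'^l" by (simp add: l power_add)
      then show "\<sigma>^l = (\<sigma>/\<sigma>')^l * \<sigma>'^k * \<sigma>'^d" using \<sigma> by (simp add: power_divide mult.assoc)
      show "\<sigma>'^d \<le> t^d" using \<sigma> by (intro power_mono) (auto simp: t_def)
    qed (use \<sigma> in simp)
  next
    case False
    then obtain d where k: "k = l + d" by (metis le_add_diff_inverse nat_le_linear)
    show ?thesis
    proof (rule that[of d "(1/\<sigma>')^d"])
      show "l^2 + k^2 = d^2 + 2*(k*l)" by (simp add: k power2_eq_square algebra_simps)
      have "\<sigma>'^l * \<sigma>'^d = \<sigma>'^k" by (simp add: k power_add)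
      then show "\<sigma>^l = (\<sigma>/\<sigma>')^l * \<sigma>'^k * (1/\<sigma>')^d" using \<sigma> by (simp add: power_divide mult.assoc)
      show "(1/\<sigma>')^d \<le> t^d" using \<sigma> by (intro power_mono) (auto simp: t_def)
    qed (use \<sigma> in simp)
  qed
  have "r^(l^2) * r^(k^2) = r^(d^2) * (r^2)^(k*l)"
    by (simp only: power_add[symmetric] power_mult[symmetric] ds(1))
  then have h: "r^(l^2) / q^(k*l) = r^(d^2) / r^(k^2)"
    using r by (simp add: field_simps)
  have "\<sigma>^l * r^(l^2) / q^(k*l) = \<sigma>^l * (r^(l^2) / q^(k*l))" by simp
  also have "\<dots> = ((\<sigma>/\<sigma>')^l * \<sigma>'^k * sd) * (r^(d^2) / r^(k^2))" by (simp only: ds(2) h)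
  also have "\<dots> = (\<sigma>/\<sigma>')^l * \<sigma>'^k * (sd * r^(d^2)) / r^(k^2)" by (simp add: mult_ac)
  also have "\<dots> \<le> (\<sigma>/\<sigma>')^l * \<sigma>'^k * B / r^(k^2)"
  proof -
    have "sd * r^(d^2) \<le> t^d * r^(d^2)" using ds(3,4) r by (intro mult_right_mono) auto
    also have "\<dots> \<le> B" unfolding t_def by (rule B)
    finally show ?thesis using \<sigma> r by (intro divide_right_mono mult_left_mono) auto
  qed
  finally show ?thesis by (simp add: field_simps)
qed

lemma growth_bound_pseries_at_qpoles:
  assumes r: "0 < r" "r < 1" "q = r^2" and \<sigma>: "0 < \<sigma>" "\<sigma> < \<sigma>'"
    and \<epsilon>: "\<epsilon> = 1 \<or> \<epsilon> = -1" and a: "decay_bound r \<sigma> C a"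
  obtains K where "growth_bound r \<sigma>' K (\<lambda>k. pseries a (qpole q \<epsilon> k))"
proof -
  have "0 \<le> max \<sigma>' (1/\<sigma>')" using \<sigma> by simp
  then obtain B where B: "\<And>n. (max \<sigma>' (1/\<sigma>'))^n * r^(n^2) \<le> B"
    using power_mult_power_square_bounded[OF r(1,2)] by blast
  have C0: "C \<ge> 0" by (rule decay_bound_nonneg[OF a])
  have rat: "0 \<le> \<sigma>/\<sigma>'" "\<sigma>/\<sigma>' < 1" using \<sigma> by auto
  define K where "K = C * B / (1 - \<sigma>/\<sigma>')"
  show ?thesis
  proof (rule that[of K], unfold growth_bound_def, rule allI)
    fix k
    let ?x = "qpole q \<epsilon> k"
    let ?G = "C * (B * \<sigma>'^k / r^(k^2))"
    have nx: "norm ?x = 1/q^k" using \<epsilon> r by (auto simp: qpole_def norm_mult norm_divide norm_power)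
    have term_bound: "norm (a l * ?x^l) \<le> ?G * (\<sigma>/\<sigma>')^l" for l
    proof -
      have "norm (a l * ?x^l) = norm (a l) / q^(k*l)"
        by (simp add: norm_mult norm_power nx power_mult power_divide)
      also have "\<dots> \<le> C * \<sigma>^l * r^(l^2) / q^(k*l)"
        using a r by (intro divide_right_mono) (auto simp: decay_bound_def)
      also have "\<dots> = C * (\<sigma>^l * r^(l^2) / q^(k*l))" by simp
      also have "\<dots> \<le> C * ((\<sigma>/\<sigma>')^l * (B * \<sigma>'^k / r^(k^2)))"
        by (intro mult_left_mono power_square_div_power_le[OF r(1,3) \<sigma> B] C0)
      finally show ?thesis by (simp add: mult_ac)
    qed
    have gs: "summable (\<lambda>l. ?G * (\<sigma>/\<sigma>')^l)"
      by (intro summable_mult summable_geometric) (use rat in simp)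
    have ns: "summable (\<lambda>l. norm (a l * ?x^l))"
      by (rule summable_comparison_test'[OF gs]) (use term_bound in simp)
    have "norm (pseries a ?x) \<le> (\<Sum>l. norm (a l * ?x^l))"
      unfolding pseries_def by (rule summable_norm[OF ns])
    also have "\<dots> \<le> (\<Sum>l. ?G * (\<sigma>/\<sigma>')^l)" by (rule suminf_le[OF term_bound ns gs])
    also have "\<dots> = ?G * (1 / (1 - \<sigma>/\<sigma>'))"
      using suminf_mult[OF summable_geometric, of "\<sigma>/\<sigma>'" ?G] suminf_geometric[of "\<sigma>/\<sigma>'"] rat
      by simp
    also have "\<dots> = K * \<sigma>'^k / r^(k^2)" by (simp add: K_def mult_ac)
    finally show "norm (pseries a ?x) \<le> K * \<sigma>'^k / r^(k^2)" .
  qed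
qed

section \<open>The q-convolution with a multiple of the q-Gaussian\<close>

lemma decay_bound_funpow_qgauss_qD_coeffs:
  assumes r: "0 < r" "r < 1" "q = r^2" and s: "0 < s" and a: "decay_bound r s C a"
  shows "decay_bound r s (C * ((s*r + 1/(s*r))/(1-q))^e) ((qgauss_qD_coeffs q ^^ e) a)"
proof (induction e)
  case (Suc e)
  show ?case using decay_bound_qgauss_qD_coeffs[OF r s Suc] by (simp add: mult_ac)
qed (use a in simp)

lemma qD_series_eq_pseries:
  fixes m a :: "nat \<Rightarrow> complex"
  assumes r: "0 < r" "r < 1" "q = r^2" and s: "0 < s" and a: "decay_bound r s C a"
    and m: "\<And>c. c \<ge> 0 \<Longrightarrow> summable (\<lambda>e. norm (m e) * c^e)"
  obtains h where "\<And>x. summable (\<lambda>n. h n * x^n)"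
    and "\<And>x. summable (\<lambda>e. norm (m e * pseries ((qgauss_qD_coeffs q ^^ e) a) x))"
    and "\<And>x. (\<Sum>e. m e * pseries ((qgauss_qD_coeffs q ^^ e) a) x) = pseries h x"
proof -
  define \<kappa> where "\<kappa> = (s*r + 1/(s*r))/(1-q)"
  define b where "b e = (qgauss_qD_coeffs q ^^ e) a" for e
  define h where "h n = (\<Sum>e. m e * b e n)" for n
  define B where "B x = (\<lambda>n. C * ((s * norm x)^n * r^(n^2)))" for x :: complex
  have q1: "q < 1" using r by (simp add: power_less_one_iff)
  have \<kappa>0: "\<kappa> \<ge> 0" using r s q1 by (simp add: \<kappa>_def)
  have C0: "C \<ge> 0" by (rule decay_bound_nonneg[OF a])
  have B: "summable (B x)" "B x n \<ge> 0" for x n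
    using summable_mult[OF summable_power_mult_power_square[OF r(1,2), of "s * norm x"], of C] s C0 r
    by (auto simp: B_def)
  have b: "decay_bound r s (C * \<kappa>^e) (b e)" for e
    unfolding b_def \<kappa>_def by (rule decay_bound_funpow_qgauss_qD_coeffs[OF r s a])
  have bound: "norm (m e * (b e n * x^n)) \<le> (norm (m e) * \<kappa>^e) * B x n" for e n x
  proof -
    have "norm (b e n * x^n) \<le> C * \<kappa>^e * s^n * r^(n^2) * norm x ^ n"
      using b[of e] unfolding decay_bound_def norm_mult norm_power by (intro mult_right_mono) auto
    also have "\<dots> = \<kappa>^e * B x n" by (simp add: B_def power_mult_distrib mult_ac)
    finally show ?thesis by (simp add: norm_mult mult_left_mono mult.assoc)
  qed
  have A0: "0 \<le> norm (m e) * \<kappa>^e" for e using \<kappa>0 by simp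
  have double: "summable (\<lambda>e. norm (\<Sum>n. m e * (b e n * x^n)))"
    "summable (\<lambda>n. norm (\<Sum>e. m e * (b e n * x^n)))"
    "(\<Sum>e. \<Sum>n. m e * (b e n * x^n)) = (\<Sum>n. \<Sum>e. m e * (b e n * x^n))" for x
    by (rule product_bounded_double_series[OF bound[of _ _ x] m[OF \<kappa>0] B(1)[of x] A0 B(2)[of x]])+
  have rows: "(\<Sum>n. m e * (b e n * x^n)) = m e * pseries (b e) x" for e x
    unfolding pseries_def by (rule suminf_mult[OF decay_bound_summable[OF r(1,2) _ b]]) (use s in simp)
  have cols: "(\<Sum>e. m e * (b e n * x^n)) = h n * x^n" for n x
  proof -
    have "norm (m e * b e n) \<le> norm (m e) * \<kappa>^e * B 1 n" for e using bound[of e n 1] by simp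
    then have "summable (\<lambda>e. norm (m e * b e n))"
      by (intro summable_comparison_test'[OF summable_mult2[OF m[OF \<kappa>0], of "B 1 n"]]) simp
    then have "summable (\<lambda>e. m e * b e n)" by (rule summable_norm_cancel)
    then show ?thesis unfolding h_def by (simp add: suminf_mult2 mult.assoc)
  qed
  show ?thesis
  proof (rule that)
    show "summable (\<lambda>n. h n * x^n)" for x
      using summable_norm_cancel[OF double(2)[of x]] by (simp add: cols)
    show "summable (\<lambda>e. norm (m e * pseries ((qgauss_qD_coeffs q ^^ e) a) x))" for x
      using double(1)[of x] unfolding rows by (simp add: b_def)
    show "(\<Sum>e. m e * pseries ((qgauss_qD_coeffs q ^^ e) a) x) = pseries h x" for x
      using double(3)[of x] unfolding rows cols by (simp add: b_def pseries_def)
  qed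
qed

lemma qD_series_vanishing_imp_vanishes_at_qpoles:
  fixes m a :: "nat \<Rightarrow> complex"
  assumes q: "0 < q" "q < 1" and r: "0 < r" "r^2 = q" and s: "0 < s" "r * s < 1"
    and a: "decay_bound r s C a" and m: "\<And>c. c \<ge> 0 \<Longrightarrow> summable (\<lambda>e. norm (m e) * c^e)"
    and nz: "m e0 \<noteq> 0" and H: "\<And>x. (\<Sum>e. m e * pseries ((qgauss_qD_coeffs q ^^ e) a) x) = 0"
  shows "vanishes_at_qpoles q a"
proof -
  have r1: "r < 1" using power_less1_D[of r 2] r q by simp
  have "pseries a (qpole q \<epsilon> k) = 0" if \<epsilon>: "\<epsilon> = 1 \<or> \<epsilon> = -1" for \<epsilon> k
  proof -
    interpret pole_chain q \<epsilon> using q \<epsilon> by unfold_locales auto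
    define w where "w k = pseries a (qpole q \<epsilon> k)" for k
    have "(pole_op q \<epsilon> ^^ e) w = (\<lambda>k. pseries ((qgauss_qD_coeffs q ^^ e) a) (qpole q \<epsilon> k))" for e
    proof (induction e)
      case (Suc e)
      have "summable (\<lambda>n. (qgauss_qD_coeffs q ^^ e) a n * y^n)" for y
        using decay_bound_summable[OF r(1) r1 _ decay_bound_funpow_qgauss_qD_coeffs[OF r(1) r1
              r(2)[symmetric] s(1) a]] s by simp
      then show ?case using Suc by (simp add: pseries_qgauss_qD_coeffs_at_qpole)
    qed (simp add: w_def)
    then have M0: "op_powser m (pole_op q \<epsilon>) w k = 0" for k
      using H[of "qpole q \<epsilon> k"] by (simp add: op_powser_def)
    define \<sigma>' where "\<sigma>' = (s + 1/r)/2"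
    have sr: "s < 1/r" using s r by (simp add: field_simps mult.commute)
    have \<sigma>': "s < \<sigma>'" "r * \<sigma>' < 1" "0 < \<sigma>'"
    proof -
      show "s < \<sigma>'" "0 < \<sigma>'" using sr s r by (simp_all add: \<sigma>'_def)
      have "\<sigma>' < 1/r" using sr by (simp add: \<sigma>'_def)
      then show "r * \<sigma>' < 1" using r by (simp add: field_simps mult.commute)
    qed
    obtain K where K: "growth_bound r \<sigma>' K w"
      using growth_bound_pseries_at_qpoles[OF r(1) r1 r(2)[symmetric] s(1) \<sigma>'(1) \<epsilon> a]
      unfolding w_def by blast
    have mser: "summable (\<lambda>e. m e * z^e)" for z
      by (rule summable_norm_cancel, rule summable_comparison_test'[OF m[of "norm z"]])
         (auto simp: norm_mult norm_power)
    obtain N where "\<And>k. k \<ge> N \<Longrightarrow> (\<Sum>e. m e * pole_op_diag q \<epsilon> k ^ e) \<noteq> 0"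
      using powser_pole_op_diag_eventually_nonzero[OF mser nz] by blast
    then have "w k = 0" using op_powser_pole_op_eq_0_imp_eq_0[OF r(1,2) \<sigma>'(3,2) K m M0] by blast
    then show ?thesis by (simp add: w_def)
  qed
  then show ?thesis by (simp add: vanishes_at_qpoles_def)
qed

lemma qD_series_vanishing_on_strip_imp_eq_0:
  fixes m a :: "nat \<Rightarrow> complex"
  assumes q: "0 < q" "q < 1" and s: "0 < s" "s * sqrt q < 1"
    and a: "decay_bound (sqrt q) s C a" and F: "\<forall>x\<in>strip. F x = pseries a x * qgauss q x"
    and m: "\<And>c. c \<ge> 0 \<Longrightarrow> summable (\<lambda>e. norm (m e) * c^e)" and nz: "m e0 \<noteq> 0"
    and conv: "\<And>x. x \<in> strip \<Longrightarrow> x \<noteq> 0 \<Longrightarrow> summable (\<lambda>e. norm (m e * (qD q ^^ e) F x))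
                 \<Longrightarrow> (\<Sum>e. m e * (qD q ^^ e) F x) = 0"
  shows "a n = 0"
proof -
  define r where "r = sqrt q"
  have r: "0 < r" "r < 1" "r^2 = q" using q by (auto simp: r_def)
  let ?b = "\<lambda>e. (qgauss_qD_coeffs q ^^ e) a"
  obtain h where h: "\<And>x. summable (\<lambda>n. h n * x^n)"
    and sm: "\<And>x. summable (\<lambda>e. norm (m e * pseries (?b e) x))"
    and H: "\<And>x. (\<Sum>e. m e * pseries (?b e) x) = pseries h x"
    using qD_series_eq_pseries[OF r(1,2) r(3)[symmetric] s(1) a[folded r_def] m] by blast
  have "pseries h x = 0" if x: "x \<in> strip" "x \<noteq> 0" for x
  proof -
    have "summable (\<lambda>n. ?b e n * y^n)" for e y
      using decay_bound_summable[OF r(1,2) _ decay_bound_funpow_qgauss_qD_coeffs[OF r(1,2)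
            r(3)[symmetric] s(1) a[folded r_def]]] s by simp
    then have qDF: "m e * (qD q ^^ e) F x = qgauss q x * (m e * pseries (?b e) x)" for e
      using qD_funpow_qgauss_mult[OF q _ F x] by simp
    have "qgauss q x * pseries h x = (\<Sum>e. m e * (qD q ^^ e) F x)"
      unfolding qDF H[symmetric] by (rule suminf_mult[OF summable_norm_cancel[OF sm], symmetric])
    also have "\<dots> = 0"
      using conv[OF x] sm[of x] summable_mult[OF sm[of x], of "norm (qgauss q x)"]
      unfolding qDF by (simp add: norm_mult)
    finally show ?thesis using qgauss_nonzero[OF q x(1)] by simp
  qed
  then have "h n = 0" for n
    using entire_powser_eq_0_if_vanishes_near_0[OF h zero_less_one] norm_less_1_imp_strip
    unfolding pseries_def by blast
  then have "\<And>x. (\<Sum>e. m e * pseries (?b e) x) = 0" unfolding H by (simp add: pseries_def)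
  then have v: "vanishes_at_qpoles q a"
    using qD_series_vanishing_imp_vanishes_at_qpoles[OF q r(1,3) s(1) _ a[folded r_def] m nz] s
    by (simp add: r_def mult.commute)
  define \<rho> where "\<rho> = sqrt r"
  have \<rho>2: "\<rho>^2 = r" using r by (simp add: \<rho>_def)
  have \<rho>: "0 < \<rho>" "\<rho> < 1" "\<rho>^4 \<le> q"
  proof -
    show "0 < \<rho>" "\<rho> < 1" using r by (auto simp: \<rho>_def)
    have "\<rho>^4 = (\<rho>^2)^2" by simp
    then show "\<rho>^4 \<le> q" using r by (simp add: \<rho>2)
  qed
  obtain C' where "decay_bound \<rho> (1/2) C' a"
    using decay_bound_square_root[where \<sigma>="1/2", OF \<rho>(1,2) _ _ a[folded r_def, folded \<rho>2]] s
    by auto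
  then show "a n = 0" by (rule vanishes_at_qpoles_imp_eq_0[OF q \<rho> _ v])
qed

definition qconv_coeff :: "real \<Rightarrow> real \<Rightarrow> (real \<Rightarrow> complex) \<Rightarrow> nat \<Rightarrow> complex" where
  "qconv_coeff q \<gamma> g e = (-1)^e * qmoment q \<gamma> g e / complex_of_real (qfact q e)"

lemma qconv_term_eq: "qconv_term q \<gamma> g h x e = qconv_coeff q \<gamma> g e * (qD q ^^ e) h x"
  by (simp add: qconv_term_def qconv_coeff_def)

lemma qmoment_series_eq_powser:
  "qmoment_series q \<gamma> g t = (\<Sum>e. qconv_coeff q \<gamma> g e * (-t)^e)"
proof -
  have "qconv_coeff q \<gamma> g e * (-t)^e = qmoment q \<gamma> g e * t^e / complex_of_real (qfact q e)" for e
  proof -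
    have "qconv_coeff q \<gamma> g e * (-t)^e
        = ((-1)^e * (-1)^e) * (qmoment q \<gamma> g e * t^e / complex_of_real (qfact q e))"
      unfolding qconv_coeff_def power_minus[of t]
      by (simp only: times_divide_eq_left times_divide_eq_right mult_ac)
    then show ?thesis by simp
  qed
  then show ?thesis by (simp add: qmoment_series_def)
qed

lemma I_E_summable_qconv_coeff:
  assumes g: "g \<in> I_E q \<gamma>" and c: "c \<ge> 0"
  shows "summable (\<lambda>e. norm (qconv_coeff q \<gamma> g e) * c^e)"
proof -
  have "summable (\<lambda>e. qmoment q \<gamma> g e / complex_of_real (qfact q e) * (complex_of_real (c+1))^e)"
    using g by (simp add: I_E_def times_divide_eq_left)
  then have "summable (\<lambda>e. norm (qmoment q \<gamma> g e / complex_of_real (qfact q e) * (complex_of_real c)^e))"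
    by (rule powser_insidea) (use c in simp)
  moreover have "norm (qmoment q \<gamma> g e / complex_of_real (qfact q e) * (complex_of_real c)^e)
      = norm (qconv_coeff q \<gamma> g e) * c^e" for e
    using c by (simp add: qconv_coeff_def norm_mult norm_divide norm_power)
  ultimately show ?thesis by simp
qed

lemma qmoment_series_eq_0_iff:
  assumes g: "g \<in> I_E q \<gamma>"
  shows "(\<forall>t. qmoment_series q \<gamma> g t = 0) \<longleftrightarrow> (\<forall>e. qconv_coeff q \<gamma> g e = 0)"
proof
  assume "\<forall>t. qmoment_series q \<gamma> g t = 0"
  then have "(\<Sum>e. qconv_coeff q \<gamma> g e * z^e) = 0" for z
    using qmoment_series_eq_powser[of q \<gamma> g "-z"] by simp
  moreover have "summable (\<lambda>e. qconv_coeff q \<gamma> g e * z^e)" for z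
    by (rule summable_norm_cancel, rule summable_comparison_test'[OF I_E_summable_qconv_coeff[OF g,
          of "norm z"]]) (auto simp: norm_mult norm_power)
  ultimately show "\<forall>e. qconv_coeff q \<gamma> g e = 0"
    using entire_powser_eq_0_if_vanishes_near_0[OF _ zero_less_one] by blast
qed (simp add: qmoment_series_eq_powser)

lemma qconv_eq_0_if_qconv_coeff_eq_0:
  "\<forall>e. qconv_coeff q \<gamma> g e = 0 \<Longrightarrow> qconv q \<gamma> g h x = 0"
  by (simp add: qconv_def qconv_term_eq)

lemma qconv_eq_0_if_eq_0_on_strip:
  "0 < q \<Longrightarrow> q < 1 \<Longrightarrow> \<forall>x\<in>strip. F x = 0 \<Longrightarrow> x \<in> strip \<Longrightarrow> qconv q \<gamma> g F x = 0"
  using qD_funpow_eq_0_on_strip by (simp add: qconv_def qconv_term_eq)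

lemma M_s_imp_qgauss_mult:
  assumes "F \<in> M_s q s" and "0 < q"
  obtains a C where "decay_bound (sqrt q) s C a" and "\<forall>x\<in>strip. F x = pseries a x * qgauss q x"
proof -
  obtain a C where aC: "\<forall>l. norm (a l) \<le> C * s^l * q powr (real l ^ 2 / 2)"
      "\<forall>x\<in>strip. F x = (\<Sum>l. a l * x ^ l) * qexp (q^2) (- (x^2))"
    using assms(1) unfolding M_s_def by blast
  have "q powr (real l ^ 2 / 2) = sqrt q ^ (l^2)" for l
    using \<open>0 < q\<close> by (simp add: powr_half_sqrt[symmetric] powr_power)
  then show ?thesis using aC that by (simp add: decay_bound_def pseries_def qgauss_def)
qed

lemma qconv_vanishing_imp_eq_0_on_strip:
  assumes q: "0 < q" "q < 1" and s: "0 < s" "s < q powr (-1/2)"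
    and g: "g \<in> I_E q \<gamma>" and F: "F \<in> M_s q s"
    and conv: "\<forall>x\<in>strip. qconv_defined q \<gamma> g F x \<longrightarrow> qconv q \<gamma> g F x = 0"
    and nz: "qconv_coeff q \<gamma> g e0 \<noteq> 0"
  shows "\<forall>x\<in>strip. F x = 0"
proof -
  obtain a C where a: "decay_bound (sqrt q) s C a" and Fa: "\<forall>x\<in>strip. F x = pseries a x * qgauss q x"
    using M_s_imp_qgauss_mult[OF F q(1)] by blast
  have "s * sqrt q < 1"
    using s q by (simp add: powr_minus powr_half_sqrt[symmetric] divide_simps mult.commute)
  then have "a n = 0" for n
    by (rule qD_series_vanishing_on_strip_imp_eq_0[OF q s(1) _ a Fa I_E_summable_qconv_coeff[OF g] nz])
       (use conv in \<open>auto simp: qconv_defined_def qconv_def qconv_term_eq\<close>)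
  then show ?thesis using Fa by (simp add: pseries_def)
qed

theorem proposition5p7:
  fixes q \<gamma> s :: real and g :: "real \<Rightarrow> complex" and F :: "complex \<Rightarrow> complex"
  assumes "0 < q" and "q < 1" and "\<gamma> > 0"
    and "0 < s" and "s < q powr (-1/2)"
    and "g \<in> I_E q \<gamma>" and "F \<in> M_s q s"
  shows "((\<forall>x\<in>strip. qconv_defined q \<gamma> g F x \<longrightarrow> qconv q \<gamma> g F x = 0)
           \<longleftrightarrow> ((\<forall>t. qmoment_series q \<gamma> g t = 0) \<or> (\<forall>x\<in>strip. F x = 0)))
         \<and> ((\<forall>x\<in>strip. qconv_defined q \<gamma> g F x \<longrightarrow> qconv q \<gamma> g F x = 0)
           \<and> (\<exists>x\<in>strip. F x \<noteq> 0)
         \<longrightarrow> (\<forall>(h::complex \<Rightarrow> complex) x. qconv_defined q \<gamma> g h x \<longrightarrow> qconv q \<gamma> g h x = 0))"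
proof -
  have moments: "(\<forall>t. qmoment_series q \<gamma> g t = 0) \<longleftrightarrow> (\<forall>e. qconv_coeff q \<gamma> g e = 0)"
    by (rule qmoment_series_eq_0_iff[OF assms(6)])
  have main: "(\<forall>x\<in>strip. qconv_defined q \<gamma> g F x \<longrightarrow> qconv q \<gamma> g F x = 0)
           \<longleftrightarrow> ((\<forall>t. qmoment_series q \<gamma> g t = 0) \<or> (\<forall>x\<in>strip. F x = 0))"
    using qconv_vanishing_imp_eq_0_on_strip[OF assms(1,2,4-7)] moments
      qconv_eq_0_if_qconv_coeff_eq_0 qconv_eq_0_if_eq_0_on_strip[OF assms(1,2)]
    by blast
  then show ?thesis using moments qconv_eq_0_if_qconv_coeff_eq_0 by blast
qed

end
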